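(* Let $\mathcal X=\{x\in\mathbb{R}^{n_1}_+: x_i\in\{0,1\}\ \forall i\in\mathcal I\}$, and for $x\in\mathcal X$ let $f(x)$ be the optimal value of the problem $(\mathrm{Inner}(x))$ defined in the context ($f(x)=+\infty$ if it is infeasible). Assume the polyhedra $P_1$ and $P_2$ defined in the context are nonempty. Let $\mathcal J_1,\mathcal R_1$ be the sets of extreme points and extreme rays of $P_1$, and $\mathcal J_2,\mathcal R_2$ the sets of extreme points and extreme rays of $P_2$. Then the problem (MIP) $\min_{x\in\mathcal X} c_x^Tx+f(x)$ is equivalent (same optimal value and same optimal $x$) to the problem $\min_{x\in\mathcal X,\,t\in\mathbb{R}}\ c_x^Tx+t$ subject to (a) $t\ge \hat\psi^T(b-Ax)+\hat u_y^T(h_y-G_{xy}x)-\hat w\,(d^T\hat y-\hat v^T(k+K_xx))$ for all $(\hat\psi,\hat u_y,\hat w)\in\mathcal J_2$, $(\hat y,\hat v)\in\mathcal J_1$; (b) $d^T\tilde y-\tilde v^T(k+K_xx)\ge 0$ for all $(\tilde y,\tilde v)\in\mathcal R_1$; (c) $0\ge \tilde\psi^T(b-Ax)+\tilde u_y^T(h_y-G_{xy}x)$ for all $(\tilde\psi,\tilde u_y,0)\in\mathcal R_2$; (d) $0\ge \tilde\psi^T(b-Ax)+\tilde u_y^T(h_y-G_{xy}x)-\tilde w\,(d^T\hat y-\hat v^T(k+K_xx))$ for all $(\hat y,\hat v)\in\mathcal J_1$ and all $(\tilde\psi,\tilde u_y,\tilde w)\in\mathcal R_2$ with $\tilde w>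0$.
   Context: Data: $c_x\in\mathbb{R}^{n_1}$, $\mathcal I\subseteq\{1,\dots,n_1\}$, $A\in\mathbb{R}^{m\times n_1}$, $B\in\mathbb{R}^{m\times n_2}$, $b\in\mathbb{R}^m$, $c_y,d\in\mathbb{R}^{n_2}$, $G_{xy}\in\mathbb{R}^{p\times n_1}$, $G_y\in\mathbb{R}^{p\times n_2}$, $h_y\in\mathbb{R}^p$, $K_\psi\in\mathbb{R}^{q\times m}$, $K_s\in\mathbb{R}^{q\times r}$, $K_x\in\mathbb{R}^{q\times n_1}$, $k\in\mathbb{R}^q$ (the $K$'s and $k$ come from a McCormick linearization of bilinear terms in a strong-duality reformulation of a bilevel program with lower level $\min_{y\ge0}\{d^Ty:Ax+By\ge b\}$). $\mathbf 1$ is the all-ones vector. $(\mathrm{Inner}(x))$: minimize $c_y^Ty$ over $y\in\mathbb{R}^{n_2}_+,\psi\in\mathbb{R}^m_+,s\in\mathbb{R}^r_+$ subject to $G_yy\ge h_y-G_{xy}x$, $By\ge b-Ax$, $-B^T\psi\ge -d$, $-d^Ty+\psi^Tb-s^T\mathbf 1\ge 0$, $K_\psi\psi+K_ss\ge k+K_xx$. $P_1=\{(y,v)\ge 0: By-K_\psi^Tv\ge b,\ K_s^Tv\le\mathbf 1\}$; $P_2=\{(\psi,u_y,w)\ge 0: B^T\psi+G_y^Tu_y\le dw+c_y\}$ ($w$ scalar). Extreme rays are those of the recession cones of these (pointed) polyhedra. *)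

theory Defs
  imports "HOL-Analysis.Analysis"
begin

definition recession_cone :: "'a::real_vector set \<Rightarrow> 'a set" where
  "recession_cone S = {d. \<forall>x\<in>S. \<forall>t::real. t \<ge> 0 \<longrightarrow> x + t *\<^sub>R d \<in> S}"

text \<open>Every positive multiple of an extreme ray
  direction is again one; the set of all such directions represents the extreme rays.\<close>
definition extreme_ray_of :: "'a::real_vector \<Rightarrow> 'a set \<Rightarrow> bool" where
  "extreme_ray_of d C \<longleftrightarrow> d \<in> C \<and> d \<noteq> 0 \<and> {t *\<^sub>R d | t::real. t \<ge> 0} face_of C"

definition extreme_points :: "'a::real_vector set \<Rightarrow> 'a set" where
  "extreme_points P = {z. z extreme_point_of P}"

definition extreme_rays :: "'a::real_vector set \<Rightarrow> 'a set" where
  "extreme_rays P = {z. extreme_ray_of z (recession_cone P)}"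

definition Xset :: "'n1 set \<Rightarrow> (real^'n1) set" where
  "Xset I = {x. 0 \<le> x \<and> (\<forall>i\<in>I. x $ i = 0 \<or> x $ i = 1)}"

definition inner_feasible ::
  "real^'n1^'m \<Rightarrow> real^'n2^'m \<Rightarrow> real^'m \<Rightarrow> real^'n2 \<Rightarrow>
   real^'n1^'p \<Rightarrow> real^'n2^'p \<Rightarrow> real^'p \<Rightarrow>
   real^'m^'q \<Rightarrow> real^'r^'q \<Rightarrow> real^'n1^'q \<Rightarrow> real^'q \<Rightarrow>
   real^'n1 \<Rightarrow> ((real^'n2) \<times> (real^'m) \<times> (real^'r)) set" where
  "inner_feasible A B b d Gxy Gy hy Kpsi Ks Kx k x =
     {(y, psi, s). 0 \<le> y \<and> 0 \<le> psi \<and> 0 \<le> s \<and>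
        Gy *v y \<ge> hy - Gxy *v x \<and>
        B *v y \<ge> b - A *v x \<and>
        - (transpose B *v psi) \<ge> - d \<and>
        - (d \<bullet> y) + psi \<bullet> b - s \<bullet> 1 \<ge> 0 \<and>
        Kpsi *v psi + Ks *v s \<ge> k + Kx *v x}"

definition inner_value ::
  "real^'n2 \<Rightarrow> real^'n1^'m \<Rightarrow> real^'n2^'m \<Rightarrow> real^'m \<Rightarrow> real^'n2 \<Rightarrow>
   real^'n1^'p \<Rightarrow> real^'n2^'p \<Rightarrow> real^'p \<Rightarrow>
   real^'m^'q \<Rightarrow> real^'r^'q \<Rightarrow> real^'n1^'q \<Rightarrow> real^'q \<Rightarrow>
   real^'n1 \<Rightarrow> ereal" where
  "inner_value cy A B b d Gxy Gy hy Kpsi Ks Kx k x =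
     Inf ((\<lambda>(y, psi, s::real^'r). ereal (cy \<bullet> y)) ` inner_feasible A B b d Gxy Gy hy Kpsi Ks Kx k x)"

definition P1set :: "real^'n2^'m \<Rightarrow> real^'m \<Rightarrow> real^'m^'q \<Rightarrow> real^'r^'q \<Rightarrow>
    ((real^'n2) \<times> (real^'q)) set" where
  "P1set B b Kpsi Ks = {(y, v). 0 \<le> y \<and> 0 \<le> v \<and>
      B *v y - transpose Kpsi *v v \<ge> b \<and> transpose Ks *v v \<le> 1}"

definition P2set :: "real^'n2^'m \<Rightarrow> real^'n2 \<Rightarrow> real^'n2^'p \<Rightarrow> real^'n2 \<Rightarrow>
    ((real^'m) \<times> (real^'p) \<times> real) set" where
  "P2set B d Gy cy = {(psi, uy, w). 0 \<le> psi \<and> 0 \<le> uy \<and> 0 \<le> w \<and>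
      transpose B *v psi + transpose Gy *v uy \<le> w *\<^sub>R d + cy}"

definition reform_feasible ::
  "'n1 set \<Rightarrow> real^'n2 \<Rightarrow> real^'n1^'m \<Rightarrow> real^'n2^'m \<Rightarrow> real^'m \<Rightarrow> real^'n2 \<Rightarrow>
   real^'n1^'p \<Rightarrow> real^'n2^'p \<Rightarrow> real^'p \<Rightarrow>
   real^'m^'q \<Rightarrow> real^'r^'q \<Rightarrow> real^'n1^'q \<Rightarrow> real^'q \<Rightarrow>
   ((real^'n1) \<times> real) set" where
  "reform_feasible I cy A B b d Gxy Gy hy Kpsi Ks Kx k =
    (let J1 = extreme_points (P1set B b Kpsi Ks); R1 = extreme_rays (P1set B b Kpsi Ks);
         J2 = extreme_points (P2set B d Gy cy); R2 = extreme_rays (P2set B d Gy cy)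
     in {(x, t). x \<in> Xset I \<and>
        (\<forall>(psi, uy, w)\<in>J2. \<forall>(y, v)\<in>J1.
           t \<ge> psi \<bullet> (b - A *v x) + uy \<bullet> (hy - Gxy *v x)
                - w * (d \<bullet> y - v \<bullet> (k + Kx *v x))) \<and>
        (\<forall>(y, v)\<in>R1. d \<bullet> y - v \<bullet> (k + Kx *v x) \<ge> 0) \<and>
        (\<forall>psi uy. (psi, uy, 0) \<in> R2 \<longrightarrow>
           0 \<ge> psi \<bullet> (b - A *v x) + uy \<bullet> (hy - Gxy *v x)) \<and>
        (\<forall>(y, v)\<in>J1. \<forall>(psi, uy, w)\<in>R2. w > 0 \<longrightarrow>
           0 \<ge> psi \<bullet> (b - A *v x) + uy \<bullet> (hy - Gxy *v x)
                - w * (d \<bullet> y - v \<bullet> (k + Kx *v x)))})"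

end

theory Submission
  imports Defs
begin

text \<open>For fixed \<open>x\<close>, \<open>f x \<le> t\<close> means that \<open>Inner(x)\<close> together with \<open>c\<^sub>y\<^sup>T y \<le> t\<close> is
  feasible.  By Farkas' lemma this fails exactly when some solution of the dual of \<open>Inner(x)\<close>,
  homogenised in the objective, has value exceeding \<open>t\<close>.  Dual solutions are built from a
  point of \<open>P\<^sub>2\<close> and a point of \<open>P\<^sub>1\<close> scaled by the coordinate \<open>w\<close>, so the dual value is
  bounded by \<open>t\<close> iff it is bounded over \<open>P\<^sub>2 \<times> P\<^sub>1\<close> and does not increase along their
  recession cones.  Both polyhedra are line-free, so linear functionals attain their minima at
  extreme points and are nonnegative on the recession cone once they are on the extreme rays;
  this turns the condition into the cuts (a)-(d).  Hence the cuts describe the epigraph of \<open>f\<close>,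
  and replacing \<open>f x\<close> by the epigraph variable \<open>t\<close> gives the equivalent problem.\<close>

section \<open>Polyhedra given by finitely many inequalities\<close>

definition polyhedron_of :: "('a::real_inner \<times> real) set \<Rightarrow> 'a set" where
  "polyhedron_of S = {z. \<forall>p\<in>S. fst p \<bullet> z \<le> snd p}"

definition line_free :: "'a::real_vector set \<Rightarrow> bool" where
  "line_free P \<longleftrightarrow> (\<forall>z d. (\<forall>t. z + t *\<^sub>R d \<in> P) \<longrightarrow> d = 0)"

definition basic_feasible_point :: "('a::real_inner \<times> real) set \<Rightarrow> 'a \<Rightarrow> bool" where
  "basic_feasible_point S j \<longleftrightarrow> j \<in> polyhedron_of S \<and>
     (\<forall>e. (\<forall>p\<in>S. fst p \<bullet> j = snd p \<longrightarrow> fst p \<bullet> e = 0) \<longrightarrow> e = 0)"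

lemma bounded_above_affine_slope_eq_0:
  fixes \<alpha> \<beta> \<gamma> :: real
  assumes "\<forall>t. \<alpha> + t * \<beta> \<le> \<gamma>"
  shows "\<beta> = 0"
proof (rule ccontr)
  assume "\<beta> \<noteq> 0"
  have "\<alpha> + ((\<gamma> - \<alpha> + 1) / \<beta>) * \<beta> \<le> \<gamma>" using assms by blast
  with \<open>\<beta> \<noteq> 0\<close> show False by simp
qed

lemma bounded_above_ray_slope_le_0:
  fixes \<alpha> \<beta> \<gamma> :: real
  assumes "\<forall>t\<ge>0. \<alpha> + t * \<beta> \<le> \<gamma>"
  shows "\<beta> \<le> 0"
proof (rule ccontr)
  assume "\<not> \<beta> \<le> 0"
  have "\<alpha> \<le> \<gamma>" using assms[rule_format, of 0] by simp
  with \<open>\<not> \<beta> \<le> 0\<close> have "(\<gamma> - \<alpha> + 1) / \<beta> \<ge> 0" by simp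
  hence "\<alpha> + ((\<gamma> - \<alpha> + 1) / \<beta>) * \<beta> \<le> \<gamma>" using assms by blast
  with \<open>\<not> \<beta> \<le> 0\<close> show False by simp
qed

lemma convex_comb_eq_bound_imp_eq:
  fixes u x y \<beta> :: real
  assumes "0 < u" "u < 1" "x \<le> \<beta>" "y \<le> \<beta>" "(1 - u) * x + u * y = \<beta>"
  shows "x = \<beta> \<and> y = \<beta>"
proof -
  have "(1 - u) * (\<beta> - x) + u * (\<beta> - y) = 0" using assms(5) by (simp add: algebra_simps)
  moreover have "(1 - u) * (\<beta> - x) \<ge> 0" "u * (\<beta> - y) \<ge> 0" using assms by simp_all
  ultimately have "(1 - u) * (\<beta> - x) = 0" "u * (\<beta> - y) = 0" by linarith+
  thus ?thesis using assms by auto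
qed

lemma recession_cone_polyhedron_of:
  assumes "polyhedron_of S \<noteq> {}"
  shows "recession_cone (polyhedron_of S) = {d. \<forall>p\<in>S. fst p \<bullet> d \<le> 0}"
proof (intro set_eqI iffI CollectI ballI)
  obtain z where z: "z \<in> polyhedron_of S" using assms by blast
  fix d p assume d: "d \<in> recession_cone (polyhedron_of S)" and p: "p \<in> S"
  have "\<forall>t\<ge>0. fst p \<bullet> z + t * (fst p \<bullet> d) \<le> snd p"
  proof (intro allI impI)
    fix t :: real assume "t \<ge> 0"
    hence "z + t *\<^sub>R d \<in> polyhedron_of S" using d z unfolding recession_cone_def by blast
    thus "fst p \<bullet> z + t * (fst p \<bullet> d) \<le> snd p"
      using p by (simp add: polyhedron_of_def inner_add_right)
  qed
  thus "fst p \<bullet> d \<le> 0" by (rule bounded_above_ray_slope_le_0)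
next
  fix d assume d: "d \<in> {d. \<forall>p\<in>S. fst p \<bullet> d \<le> 0}"
  show "d \<in> recession_cone (polyhedron_of S)"
    unfolding recession_cone_def polyhedron_of_def
  proof (intro CollectI ballI allI impI)
    fix x p and t :: real
    assume "x \<in> {z. \<forall>p\<in>S. fst p \<bullet> z \<le> snd p}" "t \<ge> 0" "p \<in> S"
    moreover have "t * (fst p \<bullet> d) \<le> 0" using d \<open>p \<in> S\<close> \<open>t \<ge> 0\<close>
      by (simp add: mult_nonneg_nonpos)
    ultimately show "fst p \<bullet> (x + t *\<^sub>R d) \<le> snd p" by (force simp: inner_add_right)
  qed
qed

lemma line_free_polyhedron_of_kernel:
  assumes "line_free (polyhedron_of S)" "polyhedron_of S \<noteq> {}" "\<forall>p\<in>S. fst p \<bullet> d = 0"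
  shows "d = 0"
proof -
  obtain z where "z \<in> polyhedron_of S" using assms(2) by blast
  hence "\<forall>t. z + t *\<^sub>R d \<in> polyhedron_of S"
    using assms(3) by (auto simp: polyhedron_of_def inner_add_right)
  thus ?thesis using assms(1) unfolding line_free_def by blast
qed

lemma basic_feasible_point_extreme_point:
  assumes "basic_feasible_point S j"
  shows "j extreme_point_of polyhedron_of S"
  unfolding extreme_point_of_def
proof (intro conjI ballI notI)
  show "j \<in> polyhedron_of S" using assms by (simp add: basic_feasible_point_def)
  fix a b assume a: "a \<in> polyhedron_of S" and b: "b \<in> polyhedron_of S" and "j \<in> open_segment a b"
  then obtain u where "a \<noteq> b" and u: "0 < u" "u < 1" and j: "j = (1 - u) *\<^sub>R a + u *\<^sub>R b"
    by (auto simp: in_segment)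
  have "fst p \<bullet> (a - b) = 0" if p: "p \<in> S" and act: "fst p \<bullet> j = snd p" for p
  proof -
    have "(1 - u) * (fst p \<bullet> a) + u * (fst p \<bullet> b) = snd p"
      using act j by (simp add: inner_add_right)
    moreover have "fst p \<bullet> a \<le> snd p" "fst p \<bullet> b \<le> snd p"
      using a b p by (auto simp: polyhedron_of_def)
    ultimately have "fst p \<bullet> a = snd p \<and> fst p \<bullet> b = snd p"
      using convex_comb_eq_bound_imp_eq[OF u] by blast
    thus ?thesis by (simp add: inner_diff_right)
  qed
  with assms have "a - b = 0" unfolding basic_feasible_point_def by blast
  thus False using \<open>a \<noteq> b\<close> by simp
qed

text \<open>If \<open>q\<close> is not basic, some \<open>e \<noteq> 0\<close> keeps all active constraints active.  One of
  \<open>\<pm>e\<close> does not increase the objective and eventually leaves the polyhedron: otherwise the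
  polyhedron would contain a line, or the objective would decrease along a recession direction.\<close>
lemma improving_edge_direction:
  assumes "line_free (polyhedron_of S)" "q \<in> polyhedron_of S"
    and cpos: "\<And>d. \<forall>p\<in>S. fst p \<bullet> d \<le> 0 \<Longrightarrow> c \<bullet> d \<ge> 0"
    and "\<not> basic_feasible_point S q"
  obtains d where "\<And>p. p \<in> S \<Longrightarrow> fst p \<bullet> q = snd p \<Longrightarrow> fst p \<bullet> d = 0"
    and "c \<bullet> d \<le> 0" and "\<exists>p\<in>S. fst p \<bullet> d > 0"
proof -
  obtain e where "e \<noteq> 0" and e: "\<And>p. p \<in> S \<Longrightarrow> fst p \<bullet> q = snd p \<Longrightarrow> fst p \<bullet> e = 0"
    using assms(2,4) by (auto simp: basic_feasible_point_def)
  define d where "d = (if c \<bullet> e \<le> 0 then e else -e)"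
  have "d \<noteq> 0" "c \<bullet> d \<le> 0" using \<open>e \<noteq> 0\<close> by (auto simp: d_def)
  have act: "fst p \<bullet> d = 0" if "p \<in> S" "fst p \<bullet> q = snd p" for p
    using e[OF that] by (simp add: d_def)
  show thesis
  proof (cases "\<exists>p\<in>S. fst p \<bullet> d > 0")
    case True
    with act \<open>c \<bullet> d \<le> 0\<close> show thesis by (rule that)
  next
    case False
    hence "c \<bullet> d \<ge> 0" by (intro cpos) (auto simp: not_less)
    with \<open>c \<bullet> d \<le> 0\<close> have "c \<bullet> (-d) \<le> 0" by simp
    have "\<exists>p\<in>S. fst p \<bullet> (-d) > 0"
    proof (rule ccontr)
      assume "\<not> ?thesis"
      with False have "\<forall>p\<in>S. fst p \<bullet> d = 0" by (force simp: not_less)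
      with assms(1,2) have "d = 0" by (intro line_free_polyhedron_of_kernel) auto
      with \<open>d \<noteq> 0\<close> show False ..
    qed
    moreover have "fst p \<bullet> (-d) = 0" if "p \<in> S" "fst p \<bullet> q = snd p" for p
      using act[OF that] by simp
    ultimately show thesis using \<open>c \<bullet> (-d) \<le> 0\<close> that by blast
  qed
qed

text \<open>The ratio test of the simplex method: moving from \<open>q\<close> along \<open>d\<close> until the first
  constraint becomes tight.\<close>
lemma ratio_test_step:
  assumes fin: "finite S" and q: "q \<in> polyhedron_of S"
    and act: "\<And>p. p \<in> S \<Longrightarrow> fst p \<bullet> q = snd p \<Longrightarrow> fst p \<bullet> d = 0"
    and "c \<bullet> d \<le> 0" and "\<exists>p\<in>S. fst p \<bullet> d > 0"
  obtains q' where "q' \<in> polyhedron_of S" "c \<bullet> q' \<le> c \<bullet> q"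
    and "{p\<in>S. fst p \<bullet> q' < snd p} \<subset> {p\<in>S. fst p \<bullet> q < snd p}"
proof -
  have qS: "fst p \<bullet> q \<le> snd p" if "p \<in> S" for p using q that by (auto simp: polyhedron_of_def)
  define T where "T = {p\<in>S. fst p \<bullet> d > 0}"
  define ratio where "ratio p = (snd p - fst p \<bullet> q) / (fst p \<bullet> d)" for p
  define \<tau> where "\<tau> = Min (ratio ` T)"
  have T: "finite T" "T \<noteq> {}" using fin assms(5) by (auto simp: T_def)
  hence "\<tau> \<in> ratio ` T" unfolding \<tau>_def by simp
  then obtain p0 where p0: "p0 \<in> T" "ratio p0 = \<tau>" by blast
  have \<tau>_le: "\<tau> \<le> ratio p" if "p \<in> T" for p unfolding \<tau>_def using T that by simp
  have p0S: "p0 \<in> S" and p0d: "fst p0 \<bullet> d > 0" using p0 by (auto simp: T_def)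
  have "\<tau> \<ge> 0" using p0 qS[OF p0S] p0d by (auto simp: ratio_def)
  define q' where "q' = q + \<tau> *\<^sub>R d"
  have q'_inner: "fst p \<bullet> q' = fst p \<bullet> q + \<tau> * (fst p \<bullet> d)" for p
    by (simp add: q'_def inner_add_right)
  have "fst p \<bullet> q' \<le> snd p" if p: "p \<in> S" for p
  proof (cases "fst p \<bullet> d > 0")
    case True
    hence "\<tau> \<le> (snd p - fst p \<bullet> q) / (fst p \<bullet> d)" using \<tau>_le p by (auto simp: T_def ratio_def)
    hence "\<tau> * (fst p \<bullet> d) \<le> snd p - fst p \<bullet> q" using True by (simp add: le_divide_eq)
    thus ?thesis using q'_inner[of p] by linarith
  next
    case False
    hence "\<tau> * (fst p \<bullet> d) \<le> 0" using \<open>\<tau> \<ge> 0\<close> by (simp add: mult_nonneg_nonpos)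
    thus ?thesis using q'_inner[of p] qS[OF p] by linarith
  qed
  hence "q' \<in> polyhedron_of S" by (simp add: polyhedron_of_def)
  moreover have "c \<bullet> q' \<le> c \<bullet> q"
    using q'_inner[of "(c, 0)"] \<open>\<tau> \<ge> 0\<close> \<open>c \<bullet> d \<le> 0\<close> by (simp add: mult_nonneg_nonpos)
  moreover have "{p\<in>S. fst p \<bullet> q' < snd p} \<subset> {p\<in>S. fst p \<bullet> q < snd p}"
  proof -
    have "\<tau> * (fst p0 \<bullet> d) = snd p0 - fst p0 \<bullet> q" using p0(2) p0d by (auto simp: ratio_def)
    hence "fst p0 \<bullet> q' = snd p0" using q'_inner[of p0] by simp
    moreover have "fst p0 \<bullet> q < snd p0" using act[OF p0S] qS[OF p0S] p0d by force
    moreover have "fst p \<bullet> q < snd p" if "p \<in> S" "fst p \<bullet> q' < snd p" for p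
      using act[of p] q'_inner[of p] qS[of p] that by fastforce
    ultimately show ?thesis using p0S by fastforce
  qed
  ultimately show thesis by (rule that)
qed

lemma exists_basic_feasible_point_le:
  assumes fin: "finite S" and "line_free (polyhedron_of S)"
    and "\<And>d. \<forall>p\<in>S. fst p \<bullet> d \<le> 0 \<Longrightarrow> c \<bullet> d \<ge> 0"
  shows "q \<in> polyhedron_of S \<Longrightarrow> \<exists>j. basic_feasible_point S j \<and> c \<bullet> j \<le> c \<bullet> q"
proof (induction "card {p\<in>S. fst p \<bullet> q < snd p}" arbitrary: q rule: less_induct)
  case less
  show ?case
  proof (cases "basic_feasible_point S q")
    case False
    obtain d where "\<And>p. p \<in> S \<Longrightarrow> fst p \<bullet> q = snd p \<Longrightarrow> fst p \<bullet> d = 0"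
        and "c \<bullet> d \<le> 0" "\<exists>p\<in>S. fst p \<bullet> d > 0"
      using improving_edge_direction[OF assms(2) less.prems assms(3) False] by blast
    then obtain q' where q': "q' \<in> polyhedron_of S" "c \<bullet> q' \<le> c \<bullet> q"
      and "{p\<in>S. fst p \<bullet> q' < snd p} \<subset> {p\<in>S. fst p \<bullet> q < snd p}"
      using ratio_test_step[OF fin less.prems] by blast
    hence "card {p\<in>S. fst p \<bullet> q' < snd p} < card {p\<in>S. fst p \<bullet> q < snd p}"
      using fin by (intro psubset_card_mono) auto
    with q'(1) obtain j where "basic_feasible_point S j" "c \<bullet> j \<le> c \<bullet> q'"
      using less.hyps by blast
    with q'(2) show ?thesis by auto
  qed auto
qed

lemma polyhedron_min_at_extreme_point:
  assumes "finite S" "line_free (polyhedron_of S)"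
    and "\<And>d. \<forall>p\<in>S. fst p \<bullet> d \<le> 0 \<Longrightarrow> c \<bullet> d \<ge> 0" and "q \<in> polyhedron_of S"
  obtains j where "j extreme_point_of polyhedron_of S" "c \<bullet> j \<le> c \<bullet> q"
  using exists_basic_feasible_point_le[OF assms] basic_feasible_point_extreme_point by blast

text \<open>The section \<open>{d \<in> recession_cone P. c \<bullet> d = -1}\<close> of the recession cone, again as a
  polyhedron; its extreme points span extreme rays of \<open>P\<close>.\<close>
definition recession_section :: "('a::real_inner \<times> real) set \<Rightarrow> 'a \<Rightarrow> ('a \<times> real) set" where
  "recession_section S c = (\<lambda>p. (fst p, 0)) ` S \<union> {(c, -1), (-c, 1)}"

lemma finite_recession_section: "finite S \<Longrightarrow> finite (recession_section S c)"
  by (simp add: recession_section_def)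

lemma polyhedron_of_recession_section:
  "z \<in> polyhedron_of (recession_section S c) \<longleftrightarrow> (\<forall>p\<in>S. fst p \<bullet> z \<le> 0) \<and> c \<bullet> z = -1"
  unfolding polyhedron_of_def recession_section_def by auto

lemma line_free_recession_section:
  assumes "line_free (polyhedron_of S)" "polyhedron_of S \<noteq> {}"
  shows "line_free (polyhedron_of (recession_section S c))"
  unfolding line_free_def
proof (intro allI impI)
  fix z d assume line: "\<forall>t. z + t *\<^sub>R d \<in> polyhedron_of (recession_section S c)"
  have "fst p \<bullet> d = 0" if p: "p \<in> S" for p
  proof -
    have "\<forall>t. fst p \<bullet> z + t * (fst p \<bullet> d) \<le> 0"
      using line p by (simp add: polyhedron_of_recession_section inner_add_right)
    thus ?thesis by (rule bounded_above_affine_slope_eq_0)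
  qed
  with assms show "d = 0" by (intro line_free_polyhedron_of_kernel) auto
qed

lemma recession_section_basic_point_span:
  assumes "line_free (polyhedron_of S)" "polyhedron_of S \<noteq> {}"
    and j: "basic_feasible_point (recession_section S c) j"
    and a: "\<forall>p\<in>S. fst p \<bullet> a \<le> 0" and act: "\<forall>p\<in>S. fst p \<bullet> j = 0 \<longrightarrow> fst p \<bullet> a = 0"
  shows "\<exists>t\<ge>0. a = t *\<^sub>R j"
proof -
  have jC: "\<forall>p\<in>S. fst p \<bullet> j \<le> 0" and cj: "c \<bullet> j = -1"
    using j by (auto simp: basic_feasible_point_def polyhedron_of_recession_section)
  define e where "e = a + (c \<bullet> a) *\<^sub>R j"
  have "fst p \<bullet> e = 0" if "p \<in> recession_section S c" "fst p \<bullet> j = snd p" for p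
  proof (cases "p \<in> (\<lambda>p. (fst p, 0)) ` S")
    case True
    then obtain p' where "p' \<in> S" "p = (fst p', 0)" by auto
    with that(2) act show ?thesis by (simp add: e_def inner_add_right)
  next
    case False
    with that(1) have "p = (c, -1) \<or> p = (-c, 1)" by (auto simp: recession_section_def)
    with cj show ?thesis by (auto simp: e_def inner_add_right)
  qed
  hence "e = 0" using j unfolding basic_feasible_point_def by blast
  hence a_eq: "a = (- (c \<bullet> a)) *\<^sub>R j" by (simp add: e_def add_eq_0_iff)
  have "c \<bullet> a \<le> 0"
  proof (rule ccontr)
    assume pos: "\<not> c \<bullet> a \<le> 0"
    have "fst p \<bullet> j = 0" if "p \<in> S" for p
    proof -
      have "- (c \<bullet> a) * (fst p \<bullet> j) \<le> 0" using a that a_eq by (metis inner_scaleR_right)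
      hence "fst p \<bullet> j \<ge> 0" using pos by (simp add: zero_le_mult_iff)
      with jC that show ?thesis by (simp add: order_antisym)
    qed
    hence "j = 0" using assms(1,2) by (intro line_free_polyhedron_of_kernel) auto
    with cj show False by simp
  qed
  with a_eq show ?thesis by (intro exI[of _ "- (c \<bullet> a)"]) simp
qed

lemma recession_section_basic_point_extreme_ray:
  assumes "line_free (polyhedron_of S)" "polyhedron_of S \<noteq> {}"
    and j: "basic_feasible_point (recession_section S c) j"
  shows "j \<in> extreme_rays (polyhedron_of S)"
proof -
  define C where "C = {d. \<forall>p\<in>S. fst p \<bullet> d \<le> 0}"
  define R where "R = {t *\<^sub>R j | t::real. t \<ge> 0}"
  have jC: "j \<in> C" and cj: "c \<bullet> j = -1"
    using j by (auto simp: C_def basic_feasible_point_def polyhedron_of_recession_section)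
  have scale: "t *\<^sub>R d \<in> C" if "d \<in> C" "t \<ge> 0" for d t
    using that by (auto simp: C_def mult_nonneg_nonpos)
  have "R face_of C"
    unfolding face_of_def
  proof (intro conjI ballI impI)
    show "R \<subseteq> C" using jC scale by (auto simp: R_def)
    show "convex R"
      unfolding R_def convex_def
    proof clarify
      fix u v t1 t2 :: real assume "0 \<le> u" "0 \<le> v" "0 \<le> t1" "0 \<le> t2"
      thus "\<exists>t. u *\<^sub>R t1 *\<^sub>R j + v *\<^sub>R t2 *\<^sub>R j = t *\<^sub>R j \<and> 0 \<le> t"
        by (intro exI[of _ "u * t1 + v * t2"]) (simp add: algebra_simps)
    qed
    fix a b x assume aC: "a \<in> C" and bC: "b \<in> C" and "x \<in> R" and "x \<in> open_segment a b"
    obtain s where x: "x = s *\<^sub>R j" using \<open>x \<in> R\<close> by (auto simp: R_def)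
    obtain u where u: "0 < u" "u < 1" and x_ab: "x = (1 - u) *\<^sub>R a + u *\<^sub>R b"
      using \<open>x \<in> open_segment a b\<close> by (auto simp: in_segment)
    have "fst p \<bullet> a = 0 \<and> fst p \<bullet> b = 0" if "p \<in> S" "fst p \<bullet> j = 0" for p
    proof -
      have "(1 - u) * (fst p \<bullet> a) + u * (fst p \<bullet> b) = 0"
        using x x_ab that(2) by (metis inner_add_right inner_scaleR_right mult_zero_right)
      moreover have "fst p \<bullet> a \<le> 0" "fst p \<bullet> b \<le> 0" using aC bC that(1) by (auto simp: C_def)
      ultimately show ?thesis using convex_comb_eq_bound_imp_eq[OF u] by blast
    qed
    hence "\<exists>t\<ge>0. a = t *\<^sub>R j" "\<exists>t\<ge>0. b = t *\<^sub>R j"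
      using aC bC by (auto simp: C_def intro!: recession_section_basic_point_span[OF assms])
    thus "a \<in> R" "b \<in> R" by (auto simp: R_def)
  qed
  moreover have "j \<noteq> 0" using cj by auto
  ultimately show ?thesis
    using jC assms(2) by (simp add: extreme_rays_def extreme_ray_of_def
        recession_cone_polyhedron_of C_def R_def)
qed

text \<open>Otherwise the section of the recession cone where \<open>c\<close> equals \<open>-1\<close> is a nonempty
  line-free polyhedron, and any of its vertices spans an extreme ray.\<close>
lemma extreme_rays_nonneg_imp_recession_cone_nonneg:
  assumes "finite S" "line_free (polyhedron_of S)" "polyhedron_of S \<noteq> {}"
    and rays: "\<And>r. r \<in> extreme_rays (polyhedron_of S) \<Longrightarrow> c \<bullet> r \<ge> 0"
    and d: "\<forall>p\<in>S. fst p \<bullet> d \<le> 0"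
  shows "c \<bullet> d \<ge> 0"
proof (rule ccontr)
  assume "\<not> c \<bullet> d \<ge> 0"
  hence "\<forall>p\<in>S. 0 \<le> fst p \<bullet> d / (c \<bullet> d)"
    using d by (simp add: divide_nonpos_neg)
  hence "(1 / - (c \<bullet> d)) *\<^sub>R d \<in> polyhedron_of (recession_section S c)"
    using \<open>\<not> c \<bullet> d \<ge> 0\<close> by (simp add: polyhedron_of_recession_section)
  then obtain j where j: "basic_feasible_point (recession_section S c) j"
    using exists_basic_feasible_point_le[of "recession_section S c" 0] assms(1-3)
    by (auto simp: finite_recession_section line_free_recession_section)
  hence "c \<bullet> j \<ge> 0"
    by (intro rays recession_section_basic_point_extreme_ray[OF assms(2,3)])
  moreover have "c \<bullet> j = -1"
    using j by (simp add: basic_feasible_point_def polyhedron_of_recession_section)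
  ultimately show False by simp
qed

lemma extreme_points_subset: "extreme_points S \<subseteq> S"
  by (auto simp: extreme_points_def extreme_point_of_def)

lemma extreme_rays_subset_recession_cone: "extreme_rays S \<subseteq> recession_cone S"
  by (auto simp: extreme_rays_def extreme_ray_of_def)

section \<open>Farkas' lemma\<close>

lemma sum_UNIV_Plus:
  fixes f :: "'a::finite + 'b::finite \<Rightarrow> 'c::comm_monoid_add"
  shows "(\<Sum>x\<in>UNIV. f x) = (\<Sum>x\<in>UNIV. f (Inl x)) + (\<Sum>y\<in>UNIV. f (Inr y))"
  using sum.Plus[of "UNIV :: 'a set" "UNIV :: 'b set" f] by (simp add: comp_def)

lemma convex_cone_nonneg_combinations:
  fixes v :: "'i::finite \<Rightarrow> 'a::real_vector"
  shows "convex_cone {\<Sum>i\<in>UNIV. l i *\<^sub>R v i | l. \<forall>i. l i \<ge> 0}"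
    (is "convex_cone ?K")
  unfolding convex_cone_def
proof (intro conjI)
  have "(0::'a) \<in> ?K" by (auto intro!: exI[of _ "\<lambda>_. 0"])
  thus "?K \<noteq> {}" by blast
  show "convex ?K"
    unfolding convex_def
  proof clarify
    fix l1 l2 :: "'i \<Rightarrow> real" and s t :: real
    assume "\<forall>i. l1 i \<ge> 0" "\<forall>i. l2 i \<ge> 0" "0 \<le> s" "0 \<le> t"
    hence nonneg: "\<forall>i. s * l1 i + t * l2 i \<ge> 0" by simp
    have comb: "s *\<^sub>R (\<Sum>i\<in>UNIV. l1 i *\<^sub>R v i) + t *\<^sub>R (\<Sum>i\<in>UNIV. l2 i *\<^sub>R v i)
        = (\<Sum>i\<in>UNIV. (s * l1 i + t * l2 i) *\<^sub>R v i)"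
      by (simp add: scaleR_sum_right sum.distrib scaleR_add_left)
    show "\<exists>l. s *\<^sub>R (\<Sum>i\<in>UNIV. l1 i *\<^sub>R v i) + t *\<^sub>R (\<Sum>i\<in>UNIV. l2 i *\<^sub>R v i)
        = (\<Sum>i\<in>UNIV. l i *\<^sub>R v i) \<and> (\<forall>i. l i \<ge> 0)"
      by (rule exI[of _ "\<lambda>i. s * l1 i + t * l2 i"]) (simp add: comb nonneg)
  qed
  show "conic ?K"
    unfolding conic_def
  proof clarify
    fix l :: "'i \<Rightarrow> real" and t :: real assume "\<forall>i. l i \<ge> 0" "0 \<le> t"
    hence nonneg: "\<forall>i. t * l i \<ge> 0" by simp
    have comb: "t *\<^sub>R (\<Sum>i\<in>UNIV. l i *\<^sub>R v i) = (\<Sum>i\<in>UNIV. (t * l i) *\<^sub>R v i)"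
      by (simp add: scaleR_sum_right)
    show "\<exists>l'. t *\<^sub>R (\<Sum>i\<in>UNIV. l i *\<^sub>R v i) = (\<Sum>i\<in>UNIV. l' i *\<^sub>R v i) \<and> (\<forall>i. l' i \<ge> 0)"
      by (rule exI[of _ "\<lambda>i. t * l i"]) (simp add: comb nonneg)
  qed
qed

lemma convex_cone_hull_range_nonneg_combination:
  fixes v :: "'i::finite \<Rightarrow> 'a::real_vector"
  assumes "z \<in> convex_cone hull range v"
  obtains l where "\<forall>i. l i \<ge> 0" "z = (\<Sum>i\<in>UNIV. l i *\<^sub>R v i)"
proof -
  have "range v \<subseteq> {\<Sum>i\<in>UNIV. l i *\<^sub>R v i | l. \<forall>i. l i \<ge> 0}"
  proof clarify
    fix i0
    have "v i0 = (\<Sum>i\<in>UNIV. (if i = i0 then 1 else 0) *\<^sub>R v i)"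
      by (simp add: if_distrib[of "\<lambda>t. t *\<^sub>R _"] cong: if_cong)
    thus "\<exists>l. v i0 = (\<Sum>i\<in>UNIV. l i *\<^sub>R v i) \<and> (\<forall>i. l i \<ge> 0)"
      by (intro exI[of _ "\<lambda>i. if i = i0 then 1 else 0"]) simp
  qed
  hence "convex_cone hull range v \<subseteq> {\<Sum>i\<in>UNIV. l i *\<^sub>R v i | l. \<forall>i. l i \<ge> 0}"
    using convex_cone_nonneg_combinations by (rule hull_minimal)
  with assms that show thesis by blast
qed

text \<open>The columns of \<open>M\<close> together with the negated unit vectors generate a closed cone; if
  \<open>h\<close> lies outside it, a separating hyperplane provides the certificate \<open>\<pi>\<close>.\<close>
lemma farkas_lemma:
  fixes M :: "'r::finite \<Rightarrow> 'c::finite \<Rightarrow> real" and h :: "'r \<Rightarrow> real"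
  assumes "\<And>\<pi>. \<forall>r. \<pi> r \<ge> 0 \<Longrightarrow> \<forall>c. (\<Sum>r\<in>UNIV. M r c * \<pi> r) \<le> 0 \<Longrightarrow> (\<Sum>r\<in>UNIV. \<pi> r * h r) \<le> 0"
  shows "\<exists>z. (\<forall>c. z c \<ge> 0) \<and> (\<forall>r. (\<Sum>c\<in>UNIV. M r c * z c) \<ge> h r)"
proof -
  define col :: "'c + 'r \<Rightarrow> real^'r" where
    "col j = (case j of Inl c \<Rightarrow> (\<chi> r. M r c) | Inr r \<Rightarrow> - axis r 1)" for j
  define hv :: "real^'r" where "hv = (\<chi> r. h r)"
  define K where "K = convex_cone hull (range col)"
  show ?thesis
  proof (cases "hv \<in> K")
    case True
    then obtain l where l: "\<forall>j. l j \<ge> 0" "hv = (\<Sum>j\<in>UNIV. l j *\<^sub>R col j)"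
      unfolding K_def by (rule convex_cone_hull_range_nonneg_combination)
    have "h r \<le> (\<Sum>c\<in>UNIV. M r c * l (Inl c))" for r
    proof -
      have "h r = hv $ r" by (simp add: hv_def)
      also have "\<dots> = (\<Sum>j\<in>UNIV. l j * (col j $ r))" by (simp add: l(2))
      also have "\<dots> = (\<Sum>c\<in>UNIV. l (Inl c) * M r c) - l (Inr r)"
        by (simp add: sum_UNIV_Plus col_def axis_def sum_negf
            if_distrib[of "\<lambda>t. l (Inr _) * t"] cong: if_cong)
      finally show ?thesis using l(1) by (simp add: mult.commute)
    qed
    with l(1) show ?thesis by (intro exI[of _ "\<lambda>c. l (Inl c)"]) simp
  next
    case False
    have "convex K" "closed K"
      unfolding K_def by (simp_all add: convex_convex_cone_hull closed_convex_cone_hull)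
    then obtain a \<beta> where sep: "a \<bullet> hv < \<beta>" "\<forall>x\<in>K. \<beta> < a \<bullet> x"
      using separating_hyperplane_closed_point False by blast
    have "\<beta> < 0" using sep(2) convex_cone_hull_contains_0 unfolding K_def by fastforce
    have a_col: "a \<bullet> col j \<ge> 0" for j
    proof (rule ccontr)
      assume neg: "\<not> a \<bullet> col j \<ge> 0"
      with \<open>\<beta> < 0\<close> have "(\<beta> / (a \<bullet> col j)) *\<^sub>R col j \<in> K"
        unfolding K_def by (intro convex_cone_hull_mul hull_inc) (auto simp: divide_nonpos_neg)
      with sep(2) neg show False by auto
    qed
    define \<pi> where "\<pi> r = - (a $ r)" for r
    have "\<forall>r. \<pi> r \<ge> 0"
      using a_col[of "Inr _"] by (simp add: \<pi>_def col_def inner_axis)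
    moreover have "\<forall>c. (\<Sum>r\<in>UNIV. M r c * \<pi> r) \<le> 0"
      using a_col[of "Inl _"]
      by (simp add: \<pi>_def col_def inner_vec_def sum_negf mult.commute)
    moreover have "(\<Sum>r\<in>UNIV. \<pi> r * h r) > 0"
      using sep(1) \<open>\<beta> < 0\<close> by (simp add: \<pi>_def hv_def inner_vec_def sum_negf)
    ultimately show ?thesis using assms by (meson not_le)
  qed
qed

lemma vec_add_mono: "(x::real^'n) \<le> y \<Longrightarrow> x' \<le> y' \<Longrightarrow> x + x' \<le> y + y'"
  by (simp add: less_eq_vec_def add_mono)

lemma vec_scaleR_mono: "(x::real^'n) \<le> y \<Longrightarrow> 0 \<le> c \<Longrightarrow> c *\<^sub>R x \<le> c *\<^sub>R y"
  by (simp add: less_eq_vec_def mult_left_mono)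

lemma vec_add_nonneg: "0 \<le> (x::real^'n) \<Longrightarrow> 0 \<le> y \<Longrightarrow> 0 \<le> x + y"
  using vec_add_mono[of 0 x 0 y] by simp

lemma vec_scaleR_nonneg: "0 \<le> (x::real^'n) \<Longrightarrow> 0 \<le> c \<Longrightarrow> 0 \<le> c *\<^sub>R x"
  using vec_scaleR_mono[of 0 x c] by simp

lemma vec_le_by_components:
  "(\<And>i. a $ i \<le> b $ i \<Longrightarrow> c $ i \<le> e $ i) \<Longrightarrow> a \<le> b \<Longrightarrow> c \<le> (e::real^'n)"
  by (simp add: less_eq_vec_def)

lemma inner_mono_nonneg_vec: "0 \<le> u \<Longrightarrow> x \<le> y \<Longrightarrow> u \<bullet> x \<le> u \<bullet> (y::real^'n)"
  unfolding inner_vec_def less_eq_vec_def by (auto intro!: sum_mono mult_left_mono)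

lemma inner_matrix_vector_mult_transpose:
  "((M::real^'n^'m) *v y) \<bullet> u = y \<bullet> (transpose M *v u)"
  by (metis dot_lmul_matrix inner_commute transpose_matrix_vector)

lemma matrix_vector_mult_component_sum:
  "((M::real^'n^'m) *v u) $ j = (\<Sum>i\<in>UNIV. M $ j $ i * u $ i)"
  by (simp add: matrix_vector_mult_def)

lemma transpose_matrix_vector_mult_component_sum:
  "(transpose (M::real^'n^'m) *v u) $ j = (\<Sum>i\<in>UNIV. M $ i $ j * u $ i)"
  by (simp add: matrix_vector_mult_def transpose_def)

lemma nonneg_line_direction_eq_0:
  fixes z d :: "real^'n"
  assumes "\<forall>t. 0 \<le> z + t *\<^sub>R d"
  shows "d = 0"
proof -
  have "d $ i = 0" for i
  proof -
    have "\<forall>t. - (z $ i) + t * (- (d $ i)) \<le> 0"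
    proof
      fix t
      have "0 \<le> (z + t *\<^sub>R d) $ i" using assms unfolding less_eq_vec_def by simp
      thus "- (z $ i) + t * (- (d $ i)) \<le> 0" by simp
    qed
    thus ?thesis using bounded_above_affine_slope_eq_0 by fastforce
  qed
  thus ?thesis by (simp add: vec_eq_iff)
qed

section \<open>The polyhedra \<open>P\<^sub>1\<close> and \<open>P\<^sub>2\<close>\<close>

text \<open>Keep \<open>transpose M *v x\<close> as in the definitions of \<open>P\<^sub>1\<close>, \<open>P\<^sub>2\<close> and \<open>Inner(x)\<close>
  instead of the library normal form \<open>x v* M\<close>.\<close>
declare transpose_matrix_vector [simp del]

definition P1_system :: "real^'n2^'m \<Rightarrow> real^'m \<Rightarrow> real^'m^'q \<Rightarrow> real^'r^'q \<Rightarrow>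
    (((real^'n2) \<times> (real^'q)) \<times> real) set" where
  "P1_system B b Kpsi Ks =
     range (\<lambda>i. ((- axis i 1, 0), 0)) \<union> range (\<lambda>i. ((0, - axis i 1), 0)) \<union>
     range (\<lambda>i. ((- (B $ i), transpose Kpsi $ i), - (b $ i))) \<union>
     range (\<lambda>i. ((0, transpose Ks $ i), 1))"

definition P2_system :: "real^'n2^'m \<Rightarrow> real^'n2 \<Rightarrow> real^'n2^'p \<Rightarrow> real^'n2 \<Rightarrow>
    (((real^'m) \<times> (real^'p) \<times> real) \<times> real) set" where
  "P2_system B d Gy cy =
     range (\<lambda>i. ((- axis i 1, 0, 0), 0)) \<union> range (\<lambda>i. ((0, - axis i 1, 0), 0)) \<union>
     {((0, 0, -1), 0)} \<union> range (\<lambda>i. ((transpose B $ i, transpose Gy $ i, - (d $ i)), cy $ i))"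

lemma finite_P1_system: "finite (P1_system B b Kpsi Ks)"
  by (simp add: P1_system_def)

lemma finite_P2_system: "finite (P2_system B d Gy cy)"
  by (simp add: P2_system_def)

lemma P1set_eq_polyhedron_of: "P1set B b Kpsi Ks = polyhedron_of (P1_system B b Kpsi Ks)"
  unfolding P1set_def polyhedron_of_def P1_system_def
  by (auto simp: less_eq_vec_def matrix_vector_mul_component inner_axis' ball_Un algebra_simps)

lemma P1_system_recession_iff:
  "(\<forall>p\<in>P1_system B b Kpsi Ks. fst p \<bullet> (y, v) \<le> 0) \<longleftrightarrow>
    0 \<le> y \<and> 0 \<le> v \<and> 0 \<le> B *v y - transpose Kpsi *v v \<and> transpose Ks *v v \<le> 0"
  unfolding P1_system_def
  by (auto simp: less_eq_vec_def matrix_vector_mul_component inner_axis' ball_Un algebra_simps)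

lemma P2set_eq_polyhedron_of: "P2set B d Gy cy = polyhedron_of (P2_system B d Gy cy)"
  unfolding P2set_def polyhedron_of_def P2_system_def
  by (auto simp: less_eq_vec_def matrix_vector_mul_component inner_axis' ball_Un algebra_simps)

lemma P2_system_recession_iff:
  "(\<forall>p\<in>P2_system B d Gy cy. fst p \<bullet> (\<psi>, u, w) \<le> 0) \<longleftrightarrow>
    0 \<le> \<psi> \<and> 0 \<le> u \<and> 0 \<le> w \<and> transpose B *v \<psi> + transpose Gy *v u \<le> w *\<^sub>R d"
  unfolding P2_system_def
  by (auto simp: less_eq_vec_def matrix_vector_mul_component inner_axis' ball_Un algebra_simps)

lemma line_free_P1: "line_free (polyhedron_of (P1_system B b Kpsi Ks))"
  unfolding line_free_def P1set_eq_polyhedron_of[symmetric]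
proof (intro allI impI)
  fix z d assume line: "\<forall>t. z + t *\<^sub>R d \<in> P1set B b Kpsi Ks"
  obtain zy zv dy dv where zd: "z = (zy, zv)" "d = (dy, dv)" by (cases z, cases d) auto
  have "(zy + t *\<^sub>R dy, zv + t *\<^sub>R dv) \<in> P1set B b Kpsi Ks" for t
    using line zd by simp
  hence "\<forall>t. 0 \<le> zy + t *\<^sub>R dy" "\<forall>t. 0 \<le> zv + t *\<^sub>R dv" by (simp_all add: P1set_def)
  with zd show "d = 0" by (simp add: nonneg_line_direction_eq_0 zero_prod_def)
qed

lemma line_free_P2: "line_free (polyhedron_of (P2_system B d Gy cy))"
  unfolding line_free_def P2set_eq_polyhedron_of[symmetric]
proof (intro allI impI)
  fix z e assume line: "\<forall>t. z + t *\<^sub>R e \<in> P2set B d Gy cy"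
  obtain z\<psi> zu zw e\<psi> eu ew where ze: "z = (z\<psi>, zu, zw)" "e = (e\<psi>, eu, ew)"
    by (cases z, cases e) auto
  have "(z\<psi> + t *\<^sub>R e\<psi>, zu + t *\<^sub>R eu, zw + t * ew) \<in> P2set B d Gy cy" for t
    using line ze by simp
  hence nonneg: "\<forall>t. 0 \<le> z\<psi> + t *\<^sub>R e\<psi>" "\<forall>t. 0 \<le> zu + t *\<^sub>R eu" "\<forall>t. 0 \<le> zw + t * ew"
    by (simp_all add: P2set_def)
  have "\<forall>t. - zw + t * (- ew) \<le> 0"
  proof
    fix t show "- zw + t * (- ew) \<le> 0" using nonneg(3)[rule_format, of t] by linarith
  qed
  hence "- ew = 0" by (rule bounded_above_affine_slope_eq_0)
  moreover have "e\<psi> = 0" "eu = 0" using nonneg(1,2) by (simp_all add: nonneg_line_direction_eq_0)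
  ultimately show "e = 0" using ze by (simp add: zero_prod_def)
qed

section \<open>The dual of \<open>Inner(x)\<close>\<close>

locale inner_data =
  fixes A :: "real^'n1^'m" and B :: "real^'n2^'m" and b :: "real^'m"
    and cy :: "real^'n2" and d :: "real^'n2"
    and Gxy :: "real^'n1^'p" and Gy :: "real^'n2^'p" and hy :: "real^'p"
    and Kpsi :: "real^'m^'q" and Ks :: "real^'r^'q" and Kx :: "real^'n1^'q" and k :: "real^'q"
begin

abbreviation "P1 \<equiv> P1set B b Kpsi Ks"
abbreviation "P2 \<equiv> P2set B d Gy cy"
abbreviation "f \<equiv> inner_value cy A B b d Gxy Gy hy Kpsi Ks Kx k"

text \<open>Dual of \<open>Inner(x)\<close> with multipliers \<open>u, \<alpha>, \<beta>, w, v\<close> for its five constraint blocks,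
  homogenised by \<open>\<mu>\<close>: the case \<open>\<mu> = 1\<close> is dual feasibility, the case \<open>\<mu> = 0\<close> describes the
  dual recession cone, and both occur as Farkas certificates.\<close>
definition dual_feasible :: "real \<Rightarrow> real^'p \<Rightarrow> real^'m \<Rightarrow> real \<Rightarrow> real^'n2 \<Rightarrow> real^'q \<Rightarrow> bool" where
  "dual_feasible \<mu> u \<alpha> w \<beta> v \<longleftrightarrow> 0 \<le> u \<and> 0 \<le> \<alpha> \<and> 0 \<le> w \<and> 0 \<le> \<beta> \<and> 0 \<le> v \<and>
     transpose Gy *v u + transpose B *v \<alpha> - w *\<^sub>R d \<le> \<mu> *\<^sub>R cy \<and>
     w *\<^sub>R b \<le> B *v \<beta> - transpose Kpsi *v v \<and> transpose Ks *v v \<le> w *\<^sub>R 1"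

definition dual_objective :: "real^'n1 \<Rightarrow> real^'p \<Rightarrow> real^'m \<Rightarrow> real^'n2 \<Rightarrow> real^'q \<Rightarrow> real" where
  "dual_objective x u \<alpha> \<beta> v = u \<bullet> (hy - Gxy *v x) + \<alpha> \<bullet> (b - A *v x) - \<beta> \<bullet> d + v \<bullet> (k + Kx *v x)"

definition cut_rhs :: "real^'n1 \<Rightarrow> real^'m \<Rightarrow> real^'p \<Rightarrow> real \<Rightarrow> real^'n2 \<Rightarrow> real^'q \<Rightarrow> real" where
  "cut_rhs x \<psi> u w y v = \<psi> \<bullet> (b - A *v x) + u \<bullet> (hy - Gxy *v x) - w * (d \<bullet> y - v \<bullet> (k + Kx *v x))"

definition benders_cuts :: "real^'n1 \<Rightarrow> real \<Rightarrow> bool" where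
  "benders_cuts x t \<longleftrightarrow>
     (\<forall>(\<psi>, u, w)\<in>extreme_points P2. \<forall>(y, v)\<in>extreme_points P1. cut_rhs x \<psi> u w y v \<le> t) \<and>
     (\<forall>(y, v)\<in>extreme_rays P1. d \<bullet> y - v \<bullet> (k + Kx *v x) \<ge> 0) \<and>
     (\<forall>\<psi> u. (\<psi>, u, 0) \<in> extreme_rays P2 \<longrightarrow> \<psi> \<bullet> (b - A *v x) + u \<bullet> (hy - Gxy *v x) \<le> 0) \<and>
     (\<forall>(y, v)\<in>extreme_points P1. \<forall>(\<psi>, u, w)\<in>extreme_rays P2. w > 0 \<longrightarrow>
        cut_rhs x \<psi> u w y v \<le> 0)"

lemma weak_duality:
  assumes "(y, \<psi>, s) \<in> inner_feasible A B b d Gxy Gy hy Kpsi Ks Kx k x"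
    and "dual_feasible 1 u \<alpha> w \<beta> v"
  shows "dual_objective x u \<alpha> \<beta> v \<le> cy \<bullet> y"
proof -
  from assms(1) have y0: "0 \<le> y" and \<psi>0: "0 \<le> \<psi>" and s0: "0 \<le> s"
    and F1: "hy - Gxy *v x \<le> Gy *v y" and F2: "b - A *v x \<le> B *v y"
    and F3: "- d \<le> - (transpose B *v \<psi>)" and F4: "0 \<le> - (d \<bullet> y) + \<psi> \<bullet> b - s \<bullet> 1"
    and F5: "k + Kx *v x \<le> Kpsi *v \<psi> + Ks *v s"
    unfolding inner_feasible_def by auto
  from assms(2) have u0: "0 \<le> u" and \<alpha>0: "0 \<le> \<alpha>" and w0: "0 \<le> w" and \<beta>0: "0 \<le> \<beta>"
    and v0: "0 \<le> v"
    and D1: "transpose Gy *v u + transpose B *v \<alpha> - w *\<^sub>R d \<le> 1 *\<^sub>R cy"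
    and D2: "w *\<^sub>R b \<le> B *v \<beta> - transpose Kpsi *v v"
    and D3: "transpose Ks *v v \<le> w *\<^sub>R 1"
    unfolding dual_feasible_def by auto
  have "transpose B *v \<psi> \<le> d" using F3 by (simp add: less_eq_vec_def)
  note mono = inner_mono_nonneg_vec and tr = inner_matrix_vector_mult_transpose
  have s1: "y \<bullet> (transpose Gy *v u + transpose B *v \<alpha> - w *\<^sub>R d) \<le> y \<bullet> cy"
    using mono[OF y0 D1] by simp
  have e1: "y \<bullet> (transpose Gy *v u + transpose B *v \<alpha> - w *\<^sub>R d)
      = u \<bullet> (Gy *v y) + \<alpha> \<bullet> (B *v y) - w * (d \<bullet> y)"
    by (simp add: inner_add_right inner_diff_right tr[symmetric] inner_commute)
  have s2: "u \<bullet> (hy - Gxy *v x) \<le> u \<bullet> (Gy *v y)" by (rule mono[OF u0 F1])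
  have s3: "\<alpha> \<bullet> (b - A *v x) \<le> \<alpha> \<bullet> (B *v y)" by (rule mono[OF \<alpha>0 F2])
  have s4: "w * (d \<bullet> y) \<le> w * (\<psi> \<bullet> b - s \<bullet> 1)" using F4 w0 by (intro mult_left_mono) auto
  have s5: "\<psi> \<bullet> (w *\<^sub>R b) \<le> \<psi> \<bullet> (B *v \<beta> - transpose Kpsi *v v)" by (rule mono[OF \<psi>0 D2])
  have e5: "\<psi> \<bullet> (B *v \<beta> - transpose Kpsi *v v) = \<beta> \<bullet> (transpose B *v \<psi>) - v \<bullet> (Kpsi *v \<psi>)"
    by (simp add: inner_diff_right inner_commute[of \<psi>] tr)
  have s6: "s \<bullet> (transpose Ks *v v) \<le> s \<bullet> (w *\<^sub>R 1)" by (rule mono[OF s0 D3])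
  have e6: "s \<bullet> (transpose Ks *v v) = v \<bullet> (Ks *v s)" by (simp add: inner_commute[of s] tr)
  have s7: "\<beta> \<bullet> (transpose B *v \<psi>) \<le> \<beta> \<bullet> d" by (rule mono[OF \<beta>0 \<open>transpose B *v \<psi> \<le> d\<close>])
  have s8: "v \<bullet> (k + Kx *v x) \<le> v \<bullet> (Kpsi *v \<psi>) + v \<bullet> (Ks *v s)"
    using mono[OF v0 F5] by (simp add: inner_add_right)
  have "w * (\<psi> \<bullet> b - s \<bullet> 1) = \<psi> \<bullet> (w *\<^sub>R b) - s \<bullet> (w *\<^sub>R 1)" by (simp add: algebra_simps)
  thus ?thesis unfolding dual_objective_def
    using s1 e1 s2 s3 s4 s5 e5 s6 e6 s7 s8 by (simp add: inner_commute[of cy])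
qed

lemma dual_feasible_add:
  assumes "dual_feasible \<mu>1 u1 \<alpha>1 w1 \<beta>1 v1" "dual_feasible \<mu>2 u2 \<alpha>2 w2 \<beta>2 v2"
  shows "dual_feasible (\<mu>1 + \<mu>2) (u1 + u2) (\<alpha>1 + \<alpha>2) (w1 + w2) (\<beta>1 + \<beta>2) (v1 + v2)"
proof -
  have "transpose Gy *v (u1 + u2) + transpose B *v (\<alpha>1 + \<alpha>2) - (w1 + w2) *\<^sub>R d
     = (transpose Gy *v u1 + transpose B *v \<alpha>1 - w1 *\<^sub>R d)
       + (transpose Gy *v u2 + transpose B *v \<alpha>2 - w2 *\<^sub>R d)"
    "B *v (\<beta>1 + \<beta>2) - transpose Kpsi *v (v1 + v2)
     = (B *v \<beta>1 - transpose Kpsi *v v1) + (B *v \<beta>2 - transpose Kpsi *v v2)"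
    "transpose Ks *v (v1 + v2) = transpose Ks *v v1 + transpose Ks *v v2"
    "(\<mu>1 + \<mu>2) *\<^sub>R cy = \<mu>1 *\<^sub>R cy + \<mu>2 *\<^sub>R cy" "(w1 + w2) *\<^sub>R b = w1 *\<^sub>R b + w2 *\<^sub>R b"
    "(w1 + w2) *\<^sub>R (1::real^'r) = w1 *\<^sub>R 1 + w2 *\<^sub>R 1"
    by (simp_all add: algebra_simps)
  with assms show ?thesis
    unfolding dual_feasible_def by (auto intro: vec_add_mono vec_add_nonneg)
qed

lemma dual_feasible_scaleR:
  assumes "dual_feasible \<mu> u \<alpha> w \<beta> v" "0 \<le> c"
  shows "dual_feasible (c * \<mu>) (c *\<^sub>R u) (c *\<^sub>R \<alpha>) (c * w) (c *\<^sub>R \<beta>) (c *\<^sub>R v)"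
proof -
  have eqs: "transpose Gy *v (c *\<^sub>R u) + transpose B *v (c *\<^sub>R \<alpha>) - (c * w) *\<^sub>R d
     = c *\<^sub>R (transpose Gy *v u + transpose B *v \<alpha> - w *\<^sub>R d)"
    "B *v (c *\<^sub>R \<beta>) - transpose Kpsi *v (c *\<^sub>R v) = c *\<^sub>R (B *v \<beta> - transpose Kpsi *v v)"
    "transpose Ks *v (c *\<^sub>R v) = c *\<^sub>R (transpose Ks *v v)"
    "(c * \<mu>) *\<^sub>R cy = c *\<^sub>R (\<mu> *\<^sub>R cy)" "(c * w) *\<^sub>R b = c *\<^sub>R (w *\<^sub>R b)"
    "(c * w) *\<^sub>R (1::real^'r) = c *\<^sub>R (w *\<^sub>R 1)"
    by (simp_all add: algebra_simps)
  from assms(1) have "0 \<le> u" "0 \<le> \<alpha>" "0 \<le> w" "0 \<le> \<beta>" "0 \<le> v"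
    and D: "transpose Gy *v u + transpose B *v \<alpha> - w *\<^sub>R d \<le> \<mu> *\<^sub>R cy"
      "w *\<^sub>R b \<le> B *v \<beta> - transpose Kpsi *v v" "transpose Ks *v v \<le> w *\<^sub>R 1"
    by (auto simp: dual_feasible_def)
  with assms(2) show ?thesis
    unfolding dual_feasible_def eqs
    by (simp add: vec_scaleR_mono vec_scaleR_nonneg del: scaleR_scaleR)
qed

lemma dual_objective_add:
  "dual_objective x (u1 + u2) (\<alpha>1 + \<alpha>2) (\<beta>1 + \<beta>2) (v1 + v2)
     = dual_objective x u1 \<alpha>1 \<beta>1 v1 + dual_objective x u2 \<alpha>2 \<beta>2 v2"
  by (simp add: dual_objective_def inner_add_left)

lemma dual_objective_scaleR:
  "dual_objective x (c *\<^sub>R u) (c *\<^sub>R \<alpha>) (c *\<^sub>R \<beta>) (c *\<^sub>R v) = c * dual_objective x u \<alpha> \<beta> v"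
  by (simp add: dual_objective_def algebra_simps)

lemma dual_feasible_of_P2_P1:
  assumes "(\<psi>, u, w) \<in> P2" "(y, v) \<in> P1"
  shows "dual_feasible 1 u \<psi> w (w *\<^sub>R y) (w *\<^sub>R v)"
    and "dual_objective x u \<psi> (w *\<^sub>R y) (w *\<^sub>R v) = cut_rhs x \<psi> u w y v"
proof -
  from assms(1) have "0 \<le> \<psi>" "0 \<le> u" and w0: "0 \<le> w"
    and P2: "transpose B *v \<psi> + transpose Gy *v u \<le> w *\<^sub>R d + cy" by (auto simp: P2set_def)
  from assms(2) have "0 \<le> y" "0 \<le> v" and P1: "b \<le> B *v y - transpose Kpsi *v v"
    "transpose Ks *v v \<le> 1" by (auto simp: P1set_def)
  have "transpose Gy *v u + transpose B *v \<psi> - w *\<^sub>R d \<le> 1 *\<^sub>R cy"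
    by (rule vec_le_by_components[OF _ P2]) (simp add: algebra_simps)
  moreover have "w *\<^sub>R b \<le> B *v (w *\<^sub>R y) - transpose Kpsi *v (w *\<^sub>R v)"
    using vec_scaleR_mono[OF P1(1) w0] by (simp add: algebra_simps)
  moreover have "transpose Ks *v (w *\<^sub>R v) \<le> w *\<^sub>R 1"
    using vec_scaleR_mono[OF P1(2) w0] by (simp add: algebra_simps)
  ultimately show "dual_feasible 1 u \<psi> w (w *\<^sub>R y) (w *\<^sub>R v)"
    using \<open>0 \<le> \<psi>\<close> \<open>0 \<le> u\<close> \<open>0 \<le> y\<close> \<open>0 \<le> v\<close> w0
    unfolding dual_feasible_def by (simp add: vec_scaleR_nonneg)
  show "dual_objective x u \<psi> (w *\<^sub>R y) (w *\<^sub>R v) = cut_rhs x \<psi> u w y v"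
    by (simp add: dual_objective_def cut_rhs_def algebra_simps inner_commute[of d])
qed

lemma P2_of_dual_feasible:
  assumes "dual_feasible 1 u \<alpha> w \<beta> v"
  shows "(\<alpha>, u, w) \<in> P2"
proof -
  from assms have D1: "transpose Gy *v u + transpose B *v \<alpha> - w *\<^sub>R d \<le> 1 *\<^sub>R cy"
    and "0 \<le> u" "0 \<le> \<alpha>" "0 \<le> w" by (auto simp: dual_feasible_def)
  moreover have "transpose B *v \<alpha> + transpose Gy *v u \<le> w *\<^sub>R d + cy"
    by (rule vec_le_by_components[OF _ D1]) (simp add: algebra_simps)
  ultimately show ?thesis by (auto simp: P2set_def)
qed

lemma P1_of_dual_feasible:
  assumes "dual_feasible 1 u \<alpha> w \<beta> v" "w > 0"
  shows "((1 / w) *\<^sub>R \<beta>, (1 / w) *\<^sub>R v) \<in> P1"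
    and "dual_objective x u \<alpha> \<beta> v = cut_rhs x \<alpha> u w ((1 / w) *\<^sub>R \<beta>) ((1 / w) *\<^sub>R v)"
proof -
  from assms(1) have "0 \<le> \<beta>" "0 \<le> v" and D2: "w *\<^sub>R b \<le> B *v \<beta> - transpose Kpsi *v v"
    and D3: "transpose Ks *v v \<le> w *\<^sub>R 1" by (auto simp: dual_feasible_def)
  have "0 \<le> 1 / w" using assms(2) by simp
  have "b \<le> B *v ((1 / w) *\<^sub>R \<beta>) - transpose Kpsi *v ((1 / w) *\<^sub>R v)"
    using vec_scaleR_mono[OF D2 \<open>0 \<le> 1 / w\<close>] assms(2) by (simp add: algebra_simps)
  moreover have "transpose Ks *v ((1 / w) *\<^sub>R v) \<le> 1"
    using vec_scaleR_mono[OF D3 \<open>0 \<le> 1 / w\<close>] assms(2) by (simp add: algebra_simps)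
  ultimately show "((1 / w) *\<^sub>R \<beta>, (1 / w) *\<^sub>R v) \<in> P1"
    using \<open>0 \<le> \<beta>\<close> \<open>0 \<le> v\<close> \<open>0 \<le> 1 / w\<close> by (simp add: P1set_def vec_scaleR_nonneg)
  show "dual_objective x u \<alpha> \<beta> v = cut_rhs x \<alpha> u w ((1 / w) *\<^sub>R \<beta>) ((1 / w) *\<^sub>R v)"
    using assms(2) by (simp add: dual_objective_def cut_rhs_def algebra_simps inner_commute[of d])
qed

lemma dual_objective_le_inner_value:
  assumes "dual_feasible 1 u \<alpha> w \<beta> v"
  shows "ereal (dual_objective x u \<alpha> \<beta> v) \<le> f x"
  unfolding inner_value_def
proof (rule Inf_greatest, clarify)
  fix y \<psi> and s :: "real^'r"
  assume "(y, \<psi>, s) \<in> inner_feasible A B b d Gxy Gy hy Kpsi Ks Kx k x"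
  from weak_duality[OF this assms] show "ereal (dual_objective x u \<alpha> \<beta> v) \<le> ereal (cy \<bullet> y)"
    by simp
qed

lemma cut_rhs_le_inner_value:
  assumes "(\<psi>, u, w) \<in> P2" "(y, v) \<in> P1"
  shows "ereal (cut_rhs x \<psi> u w y v) \<le> f x"
  using dual_objective_le_inner_value[OF dual_feasible_of_P2_P1(1)[OF assms]]
  by (simp add: dual_feasible_of_P2_P1(2)[OF assms])

lemma cut_rhs_add_scaleR:
  "cut_rhs x (\<psi> + l *\<^sub>R \<psi>') (u + l *\<^sub>R u') (w + l * w') y v
     = cut_rhs x \<psi> u w y v + l * cut_rhs x \<psi>' u' w' y v"
  by (simp add: cut_rhs_def algebra_simps inner_add_left)

lemma P1_recession_cone_iff:
  assumes "P1 \<noteq> {}"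
  shows "(y, v) \<in> recession_cone P1 \<longleftrightarrow>
    0 \<le> y \<and> 0 \<le> v \<and> 0 \<le> B *v y - transpose Kpsi *v v \<and> transpose Ks *v v \<le> 0"
  using assms by (simp add: P1set_eq_polyhedron_of recession_cone_polyhedron_of
      P1_system_recession_iff)

lemma P2_recession_cone_iff:
  assumes "P2 \<noteq> {}"
  shows "(\<psi>, u, w) \<in> recession_cone P2 \<longleftrightarrow>
    0 \<le> \<psi> \<and> 0 \<le> u \<and> 0 \<le> w \<and> transpose B *v \<psi> + transpose Gy *v u \<le> w *\<^sub>R d"
  using assms by (simp add: P2set_eq_polyhedron_of recession_cone_polyhedron_of
      P2_system_recession_iff)

text \<open>The constraints of \<open>Inner(x)\<close> together with \<open>c\<^sub>y\<^sup>T y \<le> t\<close> as one system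
  \<open>M (y, \<psi>, s) \<ge> h\<close>: the rows are indexed by the blocks \<open>G\<^sub>y\<close>, \<open>B\<close>, \<open>-B\<^sup>T\<close>, \<open>K\<close>,
  and two single rows, \<open>True\<close> for the strong-duality row and \<open>False\<close> for the objective.\<close>
definition inner_system_matrix :: "'p + ('m + ('n2 + ('q + bool))) \<Rightarrow> 'n2 + ('m + 'r) \<Rightarrow> real" where
  "inner_system_matrix r c = (case r of
      Inl i \<Rightarrow> (case c of Inl j \<Rightarrow> Gy $ i $ j | Inr _ \<Rightarrow> 0)
    | Inr (Inl i) \<Rightarrow> (case c of Inl j \<Rightarrow> B $ i $ j | Inr _ \<Rightarrow> 0)
    | Inr (Inr (Inl j)) \<Rightarrow> (case c of Inl _ \<Rightarrow> 0 | Inr (Inl i) \<Rightarrow> - B $ i $ j | Inr (Inr _) \<Rightarrow> 0)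
    | Inr (Inr (Inr (Inl l))) \<Rightarrow>
        (case c of Inl _ \<Rightarrow> 0 | Inr (Inl i) \<Rightarrow> Kpsi $ l $ i | Inr (Inr i) \<Rightarrow> Ks $ l $ i)
    | Inr (Inr (Inr (Inr True))) \<Rightarrow>
        (case c of Inl j \<Rightarrow> - d $ j | Inr (Inl i) \<Rightarrow> b $ i | Inr (Inr _) \<Rightarrow> -1)
    | Inr (Inr (Inr (Inr False))) \<Rightarrow> (case c of Inl j \<Rightarrow> - cy $ j | Inr _ \<Rightarrow> 0))"

definition inner_system_rhs :: "real^'n1 \<Rightarrow> real \<Rightarrow> 'p + ('m + ('n2 + ('q + bool))) \<Rightarrow> real" where
  "inner_system_rhs x t r = (case r of
      Inl i \<Rightarrow> (hy - Gxy *v x) $ i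
    | Inr (Inl i) \<Rightarrow> (b - A *v x) $ i
    | Inr (Inr (Inl j)) \<Rightarrow> - d $ j
    | Inr (Inr (Inr (Inl l))) \<Rightarrow> (k + Kx *v x) $ l
    | Inr (Inr (Inr (Inr True))) \<Rightarrow> 0
    | Inr (Inr (Inr (Inr False))) \<Rightarrow> - t)"

lemma sum_system_rows:
  fixes g :: "'p + ('m + ('n2 + ('q + bool))) \<Rightarrow> real"
  shows "(\<Sum>r\<in>UNIV. g r) = (\<Sum>i\<in>UNIV. g (Inl i)) + (\<Sum>i\<in>UNIV. g (Inr (Inl i)))
     + (\<Sum>j\<in>UNIV. g (Inr (Inr (Inl j)))) + (\<Sum>l\<in>UNIV. g (Inr (Inr (Inr (Inl l)))))
     + g (Inr (Inr (Inr (Inr True)))) + g (Inr (Inr (Inr (Inr False))))"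
  by (simp add: sum_UNIV_Plus UNIV_bool add_ac)

lemma sum_system_columns:
  fixes g :: "'n2 + ('m + 'r) \<Rightarrow> real"
  shows "(\<Sum>c\<in>UNIV. g c)
    = (\<Sum>j\<in>UNIV. g (Inl j)) + (\<Sum>i\<in>UNIV. g (Inr (Inl i))) + (\<Sum>l\<in>UNIV. g (Inr (Inr l)))"
  by (simp add: sum_UNIV_Plus add_ac)

lemma dual_feasible_of_farkas_certificate:
  fixes \<pi> :: "'p + ('m + ('n2 + ('q + bool))) \<Rightarrow> real"
  assumes nonneg: "\<forall>r. \<pi> r \<ge> 0" and cols: "\<forall>c. (\<Sum>r\<in>UNIV. inner_system_matrix r c * \<pi> r) \<le> 0"
  defines "u \<equiv> \<chi> i. \<pi> (Inl i)" and "\<alpha> \<equiv> \<chi> i. \<pi> (Inr (Inl i))"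
    and "\<beta> \<equiv> \<chi> j. \<pi> (Inr (Inr (Inl j)))" and "v \<equiv> \<chi> l. \<pi> (Inr (Inr (Inr (Inl l))))"
    and "w \<equiv> \<pi> (Inr (Inr (Inr (Inr True))))" and "\<mu> \<equiv> \<pi> (Inr (Inr (Inr (Inr False))))"
  shows "dual_feasible \<mu> u \<alpha> w \<beta> v \<and> \<mu> \<ge> 0"
    and "(\<Sum>r\<in>UNIV. \<pi> r * inner_system_rhs x t r) = dual_objective x u \<alpha> \<beta> v - \<mu> * t"
proof -
  have "transpose Gy *v u + transpose B *v \<alpha> - w *\<^sub>R d \<le> \<mu> *\<^sub>R cy"
    unfolding less_eq_vec_def
  proof
    fix j
    have "(\<Sum>r\<in>UNIV. inner_system_matrix r (Inl j) * \<pi> r) \<le> 0" using cols by blast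
    thus "(transpose Gy *v u + transpose B *v \<alpha> - w *\<^sub>R d) $ j \<le> (\<mu> *\<^sub>R cy) $ j"
      by (simp add: sum_system_rows inner_system_matrix_def
          transpose_matrix_vector_mult_component_sum u_def \<alpha>_def w_def \<mu>_def algebra_simps)
  qed
  moreover have "w *\<^sub>R b \<le> B *v \<beta> - transpose Kpsi *v v"
    unfolding less_eq_vec_def
  proof
    fix i
    have "(\<Sum>r\<in>UNIV. inner_system_matrix r (Inr (Inl i)) * \<pi> r) \<le> 0" using cols by blast
    thus "(w *\<^sub>R b) $ i \<le> (B *v \<beta> - transpose Kpsi *v v) $ i"
      by (simp add: sum_system_rows inner_system_matrix_def matrix_vector_mult_component_sum
          transpose_matrix_vector_mult_component_sum transpose_def \<beta>_def v_def w_def sum_negf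
          algebra_simps)
  qed
  moreover have "transpose Ks *v v \<le> w *\<^sub>R 1"
    unfolding less_eq_vec_def
  proof
    fix i
    have "(\<Sum>r\<in>UNIV. inner_system_matrix r (Inr (Inr i)) * \<pi> r) \<le> 0" using cols by blast
    thus "(transpose Ks *v v) $ i \<le> (w *\<^sub>R 1) $ i"
      by (simp add: sum_system_rows inner_system_matrix_def
          transpose_matrix_vector_mult_component_sum v_def w_def)
  qed
  moreover have "0 \<le> u" "0 \<le> \<alpha>" "0 \<le> \<beta>" "0 \<le> v" "0 \<le> w" "0 \<le> \<mu>"
    using nonneg by (simp_all add: u_def \<alpha>_def \<beta>_def v_def w_def \<mu>_def less_eq_vec_def)
  ultimately show "dual_feasible \<mu> u \<alpha> w \<beta> v \<and> \<mu> \<ge> 0" by (simp add: dual_feasible_def)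
  show "(\<Sum>r\<in>UNIV. \<pi> r * inner_system_rhs x t r) = dual_objective x u \<alpha> \<beta> v - \<mu> * t"
    by (simp add: sum_system_rows inner_system_rhs_def dual_objective_def inner_vec_def
        u_def \<alpha>_def \<beta>_def v_def \<mu>_def sum_negf algebra_simps)
qed

lemma inner_feasible_of_system_solution:
  fixes z :: "'n2 + ('m + 'r) \<Rightarrow> real"
  assumes nonneg: "\<forall>c. z c \<ge> 0"
    and rows: "\<forall>r. (\<Sum>c\<in>UNIV. inner_system_matrix r c * z c) \<ge> inner_system_rhs x t r"
  defines "y \<equiv> \<chi> j. z (Inl j)" and "\<psi> \<equiv> \<chi> i. z (Inr (Inl i))" and "s \<equiv> \<chi> l. z (Inr (Inr l))"
  shows "(y, \<psi>, s) \<in> inner_feasible A B b d Gxy Gy hy Kpsi Ks Kx k x" and "cy \<bullet> y \<le> t"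
proof -
  note row = rows[rule_format] and
    simps = sum_system_columns inner_system_matrix_def inner_system_rhs_def
      matrix_vector_mult_component_sum transpose_matrix_vector_mult_component_sum
      transpose_def y_def \<psi>_def s_def inner_vec_def sum_negf
  have "Gy *v y \<ge> hy - Gxy *v x"
    using row[of "Inl _"] by (simp add: less_eq_vec_def simps)
  moreover have "B *v y \<ge> b - A *v x"
    using row[of "Inr (Inl _)"] by (simp add: less_eq_vec_def simps)
  moreover have "- (transpose B *v \<psi>) \<ge> - d"
    using row[of "Inr (Inr (Inl _))"] by (simp add: less_eq_vec_def simps)
  moreover have "Kpsi *v \<psi> + Ks *v s \<ge> k + Kx *v x"
    using row[of "Inr (Inr (Inr (Inl _)))"] by (simp add: less_eq_vec_def simps)
  moreover have "- (d \<bullet> y) + \<psi> \<bullet> b - s \<bullet> 1 \<ge> 0"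
    using row[of "Inr (Inr (Inr (Inr True)))"] by (simp add: simps mult.commute)
  moreover have "0 \<le> y" "0 \<le> \<psi>" "0 \<le> s"
    using nonneg by (simp_all add: y_def \<psi>_def s_def less_eq_vec_def)
  ultimately show "(y, \<psi>, s) \<in> inner_feasible A B b d Gxy Gy hy Kpsi Ks Kx k x"
    by (simp add: inner_feasible_def)
  show "cy \<bullet> y \<le> t"
    using row[of "Inr (Inr (Inr (Inr False)))"] by (simp add: simps)
qed

end

section \<open>Benders cuts describe the epigraph of \<open>f\<close>\<close>

locale inner_problem = inner_data +
  assumes P1_nonempty: "P1set B b Kpsi Ks \<noteq> {}" and P2_nonempty: "P2set B d Gy cy \<noteq> {}"
begin

lemma polyhedron_of_P1_system_nonempty: "polyhedron_of (P1_system B b Kpsi Ks) \<noteq> {}"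
  using P1_nonempty by (simp add: P1set_eq_polyhedron_of)

lemma polyhedron_of_P2_system_nonempty: "polyhedron_of (P2_system B d Gy cy) \<noteq> {}"
  using P2_nonempty by (simp add: P2set_eq_polyhedron_of)

lemma inner_value_neq_minf: "f x \<noteq> -\<infinity>"
proof -
  obtain y v where "(y, v) \<in> P1" using P1_nonempty by auto
  moreover obtain \<psi> u w where "(\<psi>, u, w) \<in> P2" using P2_nonempty by auto
  ultimately show ?thesis using cut_rhs_le_inner_value[of \<psi> u w y v x] by auto
qed

lemma dual_objective_le_if_inner_value_le:
  assumes "f x \<le> ereal t" "dual_feasible 1 u \<alpha> w \<beta> v"
  shows "dual_objective x u \<alpha> \<beta> v \<le> t"
  using order_trans[OF dual_objective_le_inner_value[OF assms(2)] assms(1)] by simp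

lemma cut_rhs_le_if_inner_value_le:
  assumes "f x \<le> ereal t" "(\<psi>, u, w) \<in> P2" "(y, v) \<in> P1"
  shows "cut_rhs x \<psi> u w y v \<le> t"
  using order_trans[OF cut_rhs_le_inner_value[OF assms(2,3)] assms(1)] by simp

lemma cut_rhs_P2_recession_nonpos_if_inner_value_le:
  assumes "f x \<le> ereal t" and r: "(\<psi>', u', w') \<in> recession_cone P2" and "(y, v) \<in> P1"
  shows "cut_rhs x \<psi>' u' w' y v \<le> 0"
proof -
  obtain \<psi> u w where p: "(\<psi>, u, w) \<in> P2" using P2_nonempty by auto
  have "\<forall>l\<ge>0. cut_rhs x \<psi> u w y v + l * cut_rhs x \<psi>' u' w' y v \<le> t"
  proof (intro allI impI)
    fix l :: real assume "l \<ge> 0"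
    hence "(\<psi> + l *\<^sub>R \<psi>', u + l *\<^sub>R u', w + l * w') \<in> P2"
      using r p unfolding recession_cone_def by force
    from cut_rhs_le_if_inner_value_le[OF assms(1) this \<open>(y, v) \<in> P1\<close>]
    show "cut_rhs x \<psi> u w y v + l * cut_rhs x \<psi>' u' w' y v \<le> t"
      by (simp add: cut_rhs_add_scaleR)
  qed
  thus ?thesis by (rule bounded_above_ray_slope_le_0)
qed

lemma P1_recession_cut_nonneg_if_inner_value_le:
  assumes "f x \<le> ereal t" and r: "(y', v') \<in> recession_cone P1"
  shows "d \<bullet> y' - v' \<bullet> (k + Kx *v x) \<ge> 0"
proof -
  obtain y v where q: "(y, v) \<in> P1" using P1_nonempty by auto
  obtain \<psi> u w where p: "(\<psi>, u, w) \<in> P2" using P2_nonempty by auto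
  have ray: "dual_feasible 0 0 0 0 y' v'"
    using r P1_nonempty by (simp add: P1_recession_cone_iff dual_feasible_def)
  note base = dual_feasible_of_P2_P1(1)[OF p q]
  have "\<forall>l\<ge>0. cut_rhs x \<psi> u w y v + l * (- (d \<bullet> y' - v' \<bullet> (k + Kx *v x))) \<le> t"
  proof (intro allI impI)
    fix l :: real assume "l \<ge> 0"
    from dual_feasible_add[OF base dual_feasible_scaleR[OF ray this]]
    have "dual_feasible 1 u \<psi> w (w *\<^sub>R y + l *\<^sub>R y') (w *\<^sub>R v + l *\<^sub>R v')" by simp
    from dual_objective_le_if_inner_value_le[OF assms(1) this]
    have "dual_objective x u \<psi> (w *\<^sub>R y + l *\<^sub>R y') (w *\<^sub>R v + l *\<^sub>R v') \<le> t" .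
    moreover have "dual_objective x u \<psi> (w *\<^sub>R y + l *\<^sub>R y') (w *\<^sub>R v + l *\<^sub>R v')
        = cut_rhs x \<psi> u w y v + l * (- (d \<bullet> y' - v' \<bullet> (k + Kx *v x)))"
      by (simp add: dual_objective_def cut_rhs_def algebra_simps inner_add_left inner_commute[of d])
    ultimately show "cut_rhs x \<psi> u w y v + l * (- (d \<bullet> y' - v' \<bullet> (k + Kx *v x))) \<le> t"
      by simp
  qed
  hence "- (d \<bullet> y' - v' \<bullet> (k + Kx *v x)) \<le> 0" by (rule bounded_above_ray_slope_le_0)
  thus ?thesis by simp
qed

lemma benders_cuts_if_inner_value_le:
  assumes "f x \<le> ereal t"
  shows "benders_cuts x t"
  unfolding benders_cuts_def
proof (intro conjI)
  show "\<forall>(\<psi>, u, w)\<in>extreme_points P2. \<forall>(y, v)\<in>extreme_points P1. cut_rhs x \<psi> u w y v \<le> t"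
    using cut_rhs_le_if_inner_value_le[OF assms] extreme_points_subset[of P1]
      extreme_points_subset[of P2] by blast
  show "\<forall>(y, v)\<in>extreme_rays P1. d \<bullet> y - v \<bullet> (k + Kx *v x) \<ge> 0"
    using P1_recession_cut_nonneg_if_inner_value_le[OF assms] extreme_rays_subset_recession_cone
    by blast
  obtain y v where q: "(y, v) \<in> P1" using P1_nonempty by auto
  show "\<forall>\<psi> u. (\<psi>, u, 0) \<in> extreme_rays P2 \<longrightarrow> \<psi> \<bullet> (b - A *v x) + u \<bullet> (hy - Gxy *v x) \<le> 0"
    using cut_rhs_P2_recession_nonpos_if_inner_value_le[OF assms _ q]
      extreme_rays_subset_recession_cone by (fastforce simp: cut_rhs_def)
  show "\<forall>(y, v)\<in>extreme_points P1. \<forall>(\<psi>, u, w)\<in>extreme_rays P2. w > 0 \<longrightarrow>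
      cut_rhs x \<psi> u w y v \<le> 0"
    using cut_rhs_P2_recession_nonpos_if_inner_value_le[OF assms] extreme_rays_subset_recession_cone
      extreme_points_subset by blast
qed

lemma P1_recession_cut_nonneg_if_benders_cuts:
  assumes cuts: "benders_cuts x t" and "(y, v) \<in> recession_cone P1"
  shows "d \<bullet> y - v \<bullet> (k + Kx *v x) \<ge> 0"
proof -
  define c where "c = (d, - (k + Kx *v x))"
  have c_inner: "c \<bullet> (y', v') = d \<bullet> y' - v' \<bullet> (k + Kx *v x)" for y' v'
    by (simp add: c_def inner_commute[of v'] algebra_simps inner_diff_left inner_add_left)
  have "c \<bullet> r \<ge> 0" if "r \<in> extreme_rays (polyhedron_of (P1_system B b Kpsi Ks))" for r
  proof -
    obtain y' v' where r: "r = (y', v')" by (cases r)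
    with that have "(y', v') \<in> extreme_rays P1" by (simp add: P1set_eq_polyhedron_of)
    with cuts show ?thesis unfolding r c_inner benders_cuts_def by blast
  qed
  moreover have "\<forall>p\<in>P1_system B b Kpsi Ks. fst p \<bullet> (y, v) \<le> 0"
    using assms(2) polyhedron_of_P1_system_nonempty
    by (simp add: P1set_eq_polyhedron_of recession_cone_polyhedron_of)
  ultimately have "c \<bullet> (y, v) \<ge> 0"
    using extreme_rays_nonneg_imp_recession_cone_nonneg[OF finite_P1_system line_free_P1
        polyhedron_of_P1_system_nonempty] by blast
  thus ?thesis by (simp add: c_inner)
qed

lemma P1_vertex_cut_le:
  assumes cuts: "benders_cuts x t" and "(y, v) \<in> P1"
  obtains y' v' where "(y', v') \<in> extreme_points P1"
    and "d \<bullet> y' - v' \<bullet> (k + Kx *v x) \<le> d \<bullet> y - v \<bullet> (k + Kx *v x)"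
proof -
  define c where "c = (d, - (k + Kx *v x))"
  have c_inner: "c \<bullet> (y', v') = d \<bullet> y' - v' \<bullet> (k + Kx *v x)" for y' v'
    by (simp add: c_def inner_commute[of v'] algebra_simps inner_diff_left inner_add_left)
  have "c \<bullet> e \<ge> 0" if "\<forall>p\<in>P1_system B b Kpsi Ks. fst p \<bullet> e \<le> 0" for e
  proof -
    obtain y' v' where e: "e = (y', v')" by (cases e)
    with that have "(y', v') \<in> recession_cone P1"
      using polyhedron_of_P1_system_nonempty
      by (simp add: P1set_eq_polyhedron_of recession_cone_polyhedron_of)
    with cuts show ?thesis unfolding e c_inner by (rule P1_recession_cut_nonneg_if_benders_cuts)
  qed
  moreover have "(y, v) \<in> polyhedron_of (P1_system B b Kpsi Ks)"
    using assms(2) by (simp add: P1set_eq_polyhedron_of)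
  ultimately obtain j where "j extreme_point_of polyhedron_of (P1_system B b Kpsi Ks)"
    and "c \<bullet> j \<le> c \<bullet> (y, v)"
    using polyhedron_min_at_extreme_point[OF finite_P1_system line_free_P1] by blast
  moreover obtain y' v' where "j = (y', v')" by (cases j)
  ultimately show thesis
    using that by (simp add: extreme_points_def P1set_eq_polyhedron_of c_inner)
qed

lemma cut_rhs_le_at_P1_vertex:
  assumes cuts: "benders_cuts x t" and j: "(y, v) \<in> extreme_points P1" and "(\<psi>, u, w) \<in> P2"
  shows "cut_rhs x \<psi> u w y v \<le> t"
proof -
  define c where "c = (- (b - A *v x), - (hy - Gxy *v x), d \<bullet> y - v \<bullet> (k + Kx *v x))"
  have c_inner: "c \<bullet> (\<psi>', u', w') = - cut_rhs x \<psi>' u' w' y v" for \<psi>' u' w'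
    by (simp add: c_def cut_rhs_def algebra_simps inner_commute)
  have "c \<bullet> r \<ge> 0" if "r \<in> extreme_rays (polyhedron_of (P2_system B d Gy cy))" for r
  proof -
    obtain \<psi>' u' w' where r: "r = (\<psi>', u', w')" by (cases r)
    with that have ray: "(\<psi>', u', w') \<in> extreme_rays P2" by (simp add: P2set_eq_polyhedron_of)
    hence "w' \<ge> 0"
      using extreme_rays_subset_recession_cone P2_nonempty P2_recession_cone_iff by blast
    show ?thesis
    proof (cases "w' = 0")
      case True
      with ray have "(\<psi>', u', 0) \<in> extreme_rays P2" by simp
      with cuts have "\<psi>' \<bullet> (b - A *v x) + u' \<bullet> (hy - Gxy *v x) \<le> 0"
        unfolding benders_cuts_def by blast
      thus ?thesis by (simp add: r True c_inner cut_rhs_def)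
    next
      case False
      with \<open>w' \<ge> 0\<close> ray j cuts show ?thesis
        unfolding r c_inner benders_cuts_def by fastforce
    qed
  qed
  hence "c \<bullet> e \<ge> 0" if "\<forall>p\<in>P2_system B d Gy cy. fst p \<bullet> e \<le> 0" for e
    using extreme_rays_nonneg_imp_recession_cone_nonneg[OF finite_P2_system line_free_P2
        polyhedron_of_P2_system_nonempty] that by blast
  moreover have "(\<psi>, u, w) \<in> polyhedron_of (P2_system B d Gy cy)"
    using assms(3) by (simp add: P2set_eq_polyhedron_of)
  ultimately obtain j2 where "j2 extreme_point_of polyhedron_of (P2_system B d Gy cy)"
    and "c \<bullet> j2 \<le> c \<bullet> (\<psi>, u, w)"
    using polyhedron_min_at_extreme_point[OF finite_P2_system line_free_P2] by blast
  moreover obtain \<psi>' u' w' where j2: "j2 = (\<psi>', u', w')" by (cases j2)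
  ultimately have "(\<psi>', u', w') \<in> extreme_points P2" "cut_rhs x \<psi> u w y v \<le> cut_rhs x \<psi>' u' w' y v"
    by (simp_all add: extreme_points_def P2set_eq_polyhedron_of c_inner)
  moreover have "cut_rhs x \<psi>' u' w' y v \<le> t"
    using calculation(1) j cuts unfolding benders_cuts_def by fast
  ultimately show ?thesis by linarith
qed

lemma cut_rhs_le_if_benders_cuts:
  assumes cuts: "benders_cuts x t" and "(\<psi>, u, w) \<in> P2" "(y, v) \<in> P1"
  shows "cut_rhs x \<psi> u w y v \<le> t"
proof -
  obtain y' v' where j: "(y', v') \<in> extreme_points P1"
    and le: "d \<bullet> y' - v' \<bullet> (k + Kx *v x) \<le> d \<bullet> y - v \<bullet> (k + Kx *v x)"
    using P1_vertex_cut_le[OF cuts assms(3)] .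
  have "w \<ge> 0" using assms(2) by (simp add: P2set_def)
  hence "cut_rhs x \<psi> u w y v \<le> cut_rhs x \<psi> u w y' v'"
    using mult_left_mono[OF le] by (simp add: cut_rhs_def)
  also have "\<dots> \<le> t" by (rule cut_rhs_le_at_P1_vertex[OF cuts j assms(2)])
  finally show ?thesis .
qed

lemma dual_objective_le_if_benders_cuts:
  assumes cuts: "benders_cuts x t" and df: "dual_feasible 1 u \<alpha> w \<beta> v"
  shows "dual_objective x u \<alpha> \<beta> v \<le> t"
proof (cases "w > 0")
  case True
  from cut_rhs_le_if_benders_cuts[OF cuts P2_of_dual_feasible[OF df]
      P1_of_dual_feasible(1)[OF df True]]
  show ?thesis by (simp add: P1_of_dual_feasible(2)[OF df True])
next
  case False
  with df have "w = 0" by (simp add: dual_feasible_def)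
  with df have df0: "dual_feasible 1 u \<alpha> 0 \<beta> v" by simp
  hence "(\<beta>, v) \<in> recession_cone P1"
    using P1_nonempty by (simp add: P1_recession_cone_iff dual_feasible_def)
  hence "d \<bullet> \<beta> - v \<bullet> (k + Kx *v x) \<ge> 0" by (rule P1_recession_cut_nonneg_if_benders_cuts[OF cuts])
  moreover obtain y' v' where "(y', v') \<in> P1" using P1_nonempty by auto
  hence "cut_rhs x \<alpha> u 0 y' v' \<le> t"
    using cut_rhs_le_if_benders_cuts[OF cuts P2_of_dual_feasible[OF df0]] by blast
  ultimately show ?thesis by (simp add: cut_rhs_def dual_objective_def inner_commute[of \<beta>])
qed

text \<open>For \<open>\<mu> = 0\<close>, adding a large multiple of the certificate to a dual feasible point
  would violate the bound \<open>t\<close> unless the certificate's objective is nonpositive.\<close>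
lemma homogeneous_dual_objective_le_if_benders_cuts:
  assumes cuts: "benders_cuts x t" and df: "dual_feasible \<mu> u \<alpha> w \<beta> v" and "\<mu> \<ge> 0"
  shows "dual_objective x u \<alpha> \<beta> v \<le> \<mu> * t"
proof (cases "\<mu> > 0")
  case True
  from dual_feasible_scaleR[OF df, of "1 / \<mu>"] True
  have "dual_feasible 1 ((1 / \<mu>) *\<^sub>R u) ((1 / \<mu>) *\<^sub>R \<alpha>) ((1 / \<mu>) * w)
      ((1 / \<mu>) *\<^sub>R \<beta>) ((1 / \<mu>) *\<^sub>R v)"
    by simp
  from dual_objective_le_if_benders_cuts[OF cuts this]
  have "(1 / \<mu>) * dual_objective x u \<alpha> \<beta> v \<le> t" by (simp add: dual_objective_scaleR)
  with True show ?thesis by (simp add: field_simps)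
next
  case False
  with \<open>\<mu> \<ge> 0\<close> have "\<mu> = 0" by simp
  obtain y' v' where q: "(y', v') \<in> P1" using P1_nonempty by auto
  obtain \<psi> u' w' where p: "(\<psi>, u', w') \<in> P2" using P2_nonempty by auto
  note base = dual_feasible_of_P2_P1(1)[OF p q]
  have "\<forall>l\<ge>0. dual_objective x u' \<psi> (w' *\<^sub>R y') (w' *\<^sub>R v') + l * dual_objective x u \<alpha> \<beta> v \<le> t"
  proof (intro allI impI)
    fix l :: real assume "l \<ge> 0"
    from dual_feasible_add[OF base dual_feasible_scaleR[OF df this]] \<open>\<mu> = 0\<close>
    have "dual_feasible 1 (u' + l *\<^sub>R u) (\<psi> + l *\<^sub>R \<alpha>) (w' + l * w)
        (w' *\<^sub>R y' + l *\<^sub>R \<beta>) (w' *\<^sub>R v' + l *\<^sub>R v)"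
      by simp
    from dual_objective_le_if_benders_cuts[OF cuts this]
    show "dual_objective x u' \<psi> (w' *\<^sub>R y') (w' *\<^sub>R v') + l * dual_objective x u \<alpha> \<beta> v \<le> t"
      by (simp add: dual_objective_add dual_objective_scaleR)
  qed
  hence "dual_objective x u \<alpha> \<beta> v \<le> 0" by (rule bounded_above_ray_slope_le_0)
  with \<open>\<mu> = 0\<close> show ?thesis by simp
qed

lemma inner_value_le_if_benders_cuts:
  assumes "benders_cuts x t"
  shows "f x \<le> ereal t"
proof -
  have "\<exists>z. (\<forall>c. z c \<ge> 0) \<and>
      (\<forall>r. (\<Sum>c\<in>UNIV. inner_system_matrix r c * z c) \<ge> inner_system_rhs x t r)"
  proof (rule farkas_lemma)
    fix \<pi> assume "\<forall>r. \<pi> r \<ge> 0" "\<forall>c. (\<Sum>r\<in>UNIV. inner_system_matrix r c * \<pi> r) \<le> 0"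
    from dual_feasible_of_farkas_certificate(1)[OF this]
      dual_feasible_of_farkas_certificate(2)[OF this, of x t]
      homogeneous_dual_objective_le_if_benders_cuts[OF assms]
    show "(\<Sum>r\<in>UNIV. \<pi> r * inner_system_rhs x t r) \<le> 0" by fastforce
  qed
  then obtain z where "\<forall>c. z c \<ge> 0"
    "\<forall>r. (\<Sum>c\<in>UNIV. inner_system_matrix r c * z c) \<ge> inner_system_rhs x t r" by blast
  from inner_feasible_of_system_solution[OF this] obtain y \<psi> s
    where "(y, \<psi>, s) \<in> inner_feasible A B b d Gxy Gy hy Kpsi Ks Kx k x" "cy \<bullet> y \<le> t" by blast
  hence "f x \<le> ereal (cy \<bullet> y)" "ereal (cy \<bullet> y) \<le> ereal t"
    unfolding inner_value_def by (force intro: Inf_lower)+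
  thus ?thesis by (rule order_trans)
qed

lemma inner_value_le_iff_benders_cuts: "f x \<le> ereal t \<longleftrightarrow> benders_cuts x t"
  using benders_cuts_if_inner_value_le inner_value_le_if_benders_cuts by blast

end

section \<open>The epigraph reformulation\<close>

lemma Inf_epigraph_eq:
  fixes f :: "'a \<Rightarrow> ereal" and c :: "'a \<Rightarrow> real"
  assumes "\<And>x. f x \<noteq> -\<infinity>"
  shows "Inf ((\<lambda>x. ereal (c x) + f x) ` X)
    = Inf ((\<lambda>(x, t). ereal (c x + t)) ` {(x, t). x \<in> X \<and> f x \<le> ereal t})"
    (is "?val = ?valE")
proof (rule antisym)
  show "?valE \<le> ?val"
  proof (rule Inf_greatest, clarify)
    fix x assume "x \<in> X"
    show "?valE \<le> ereal (c x) + f x"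
    proof (cases "f x")
      case (real r)
      with \<open>x \<in> X\<close> have "?valE \<le> ereal (c x + r)" by (intro Inf_lower) force
      with real show ?thesis by simp
    qed (use assms in auto)
  qed
  show "?val \<le> ?valE"
  proof (rule Inf_greatest, clarify)
    fix x t assume "x \<in> X" "f x \<le> ereal t"
    hence "?val \<le> ereal (c x) + f x" by (intro Inf_lower) auto
    also have "\<dots> \<le> ereal (c x) + ereal t" using \<open>f x \<le> ereal t\<close> by (rule add_left_mono)
    finally show "?val \<le> ereal (c x + t)" by simp
  qed
qed

lemma argmin_epigraph_iff:
  fixes f :: "'a \<Rightarrow> ereal" and c :: "'a \<Rightarrow> real"
  assumes "\<And>x. f x \<noteq> -\<infinity>"
    and "val = Inf ((\<lambda>x. ereal (c x) + f x) ` X)"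
    and "F = {(x, t). x \<in> X \<and> f x \<le> ereal t}"
  shows "(x \<in> X \<and> f x < \<infinity> \<and> ereal (c x) + f x = val) \<longleftrightarrow>
    (\<exists>t. (x, t) \<in> F \<and> ereal (c x + t) = val)"
proof
  assume x: "x \<in> X \<and> f x < \<infinity> \<and> ereal (c x) + f x = val"
  then obtain r where "f x = ereal r" using assms(1)[of x] by (cases "f x") auto
  with x assms(3) show "\<exists>t. (x, t) \<in> F \<and> ereal (c x + t) = val" by auto
next
  assume "\<exists>t. (x, t) \<in> F \<and> ereal (c x + t) = val"
  then obtain t where "x \<in> X" "f x \<le> ereal t" and t: "ereal (c x + t) = val"
    using assms(3) by blast
  have "val \<le> ereal (c x) + f x" unfolding assms(2) using \<open>x \<in> X\<close> by (intro Inf_lower) auto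
  moreover have "ereal (c x) + f x \<le> val"
    using add_left_mono[OF \<open>f x \<le> ereal t\<close>, of "ereal (c x)"] t by simp
  ultimately show "x \<in> X \<and> f x < \<infinity> \<and> ereal (c x) + f x = val"
    using \<open>x \<in> X\<close> \<open>f x \<le> ereal t\<close> by auto
qed

theorem corollary1:
  fixes cx :: "real^'n1" and I :: "'n1 set"
    and A :: "real^'n1^'m" and B :: "real^'n2^'m" and b :: "real^'m"
    and cy :: "real^'n2" and d :: "real^'n2"
    and Gxy :: "real^'n1^'p" and Gy :: "real^'n2^'p" and hy :: "real^'p"
    and Kpsi :: "real^'m^'q" and Ks :: "real^'r^'q" and Kx :: "real^'n1^'q" and k :: "real^'q"
  assumes "P1set B b Kpsi Ks \<noteq> {}" and "P2set B d Gy cy \<noteq> {}"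
  shows "(let f = inner_value cy A B b d Gxy Gy hy Kpsi Ks Kx k;
              F = reform_feasible I cy A B b d Gxy Gy hy Kpsi Ks Kx k;
              valMIP = Inf ((\<lambda>x. ereal (cx \<bullet> x) + f x) ` Xset I);
              valR = Inf ((\<lambda>(x, t). ereal (cx \<bullet> x + t)) ` F)
          in valMIP = valR \<and>
             (\<forall>x. (x \<in> Xset I \<and> f x < \<infinity> \<and> ereal (cx \<bullet> x) + f x = valMIP) \<longleftrightarrow>
                  (\<exists>t. (x, t) \<in> F \<and> ereal (cx \<bullet> x + t) = valR)))"
proof -
  interpret inner_problem A B b cy d Gxy Gy hy Kpsi Ks Kx k
    using assms by unfold_locales
  have F: "reform_feasible I cy A B b d Gxy Gy hy Kpsi Ks Kx k
      = {(x, t). x \<in> Xset I \<and> f x \<le> ereal t}"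
    unfolding reform_feasible_def Let_def inner_value_le_iff_benders_cuts benders_cuts_def
      cut_rhs_def by simp
  note epigraph = Inf_epigraph_eq[where f = f and c = "\<lambda>x. cx \<bullet> x" and X = "Xset I"]
    argmin_epigraph_iff[where f = f and c = "\<lambda>x. cx \<bullet> x" and X = "Xset I", OF _ refl refl]
  show ?thesis
    unfolding Let_def F using epigraph inner_value_neq_minf by simp
qed

end
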